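(* Over any field of characteristic different from 2, the family $(f_k)$ with $f_k=f_{G_k,H_k}(\bar Y)$, where $G_k$ is the simple undirected cycle of length $2k+1$ and $H_k$ is the undirected complete graph on $(2k+1)^2$ vertices, is complete for $\mathsf{VBP}$ under $p$-projections.
   Context: For graphs $G,H$, a homomorphism $G\to H$ is a vertex map preserving edges. With a variable $Y_{(a,b)}$ for each edge $(a,b)\in E(H)$, the homomorphism polynomial is $f_{G,H}(\bar Y)=\sum_{\phi}\prod_{(u,v)\in E(G)}Y_{(\phi(u),\phi(v))}$, the sum over all homomorphisms $\phi:G\to H$. $\mathsf{VBP}$ is the class of $p$-families (polynomially bounded number of variables and degree) computed by polynomial-size skew arithmetic circuits (at each $\times$ gate at most one input is the output of another gate). A projection of $g$ substitutes field constants or variables for the variables of $g$; $(f_n)$ is a $p$-projection of $(g_m)$ if each $f_n$ is a projection of $g_{t(n)}$ with $t$ polynomially bounded. Complete for $\mathsf{VBP}$ under $p$-projections means the family is in $\mathsf{VBP}$ and every family in $\mathsf{VBP}$ is a $p$-projection of it. *)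

theory Defs
  imports Main "HOL-Library.Poly_Mapping" "HOL-Library.FuncSet" "HOL-Library.Nat_Bijection"
begin

type_synonym 'k mpoly = "(nat \<Rightarrow>\<^sub>0 nat) \<Rightarrow>\<^sub>0 'k"

definition pVar :: "nat \<Rightarrow> 'k::field mpoly" where
  "pVar i = Poly_Mapping.single (Poly_Mapping.single i 1) 1"

definition pConst :: "'k::field \<Rightarrow> 'k mpoly" where
  "pConst c = Poly_Mapping.single 0 c"

definition pvars :: "'k::field mpoly \<Rightarrow> nat set" where
  "pvars p = (\<Union>m\<in>Poly_Mapping.keys p. Poly_Mapping.keys (m :: nat \<Rightarrow>\<^sub>0 nat))"

definition pdeg :: "'k::field mpoly \<Rightarrow> nat" where
  "pdeg p = Max (insert 0 ((\<lambda>m. sum (Poly_Mapping.lookup m) (Poly_Mapping.keys m)) ` Poly_Mapping.keys p))"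

definition psubst :: "(nat \<Rightarrow> 'k::field mpoly) \<Rightarrow> 'k mpoly \<Rightarrow> 'k mpoly" where
  "psubst \<sigma> p = (\<Sum>m\<in>Poly_Mapping.keys p. pConst (Poly_Mapping.lookup p m) * (\<Prod>v\<in>Poly_Mapping.keys m. \<sigma> v ^ Poly_Mapping.lookup m v))"

definition is_projection :: "'k::field mpoly \<Rightarrow> 'k mpoly \<Rightarrow> bool" where
  "is_projection f g \<longleftrightarrow>
     (\<exists>\<sigma>. (\<forall>v. (\<exists>c. \<sigma> v = pConst c) \<or> (\<exists>w. \<sigma> v = pVar w)) \<and> f = psubst \<sigma> g)"

definition poly_bounded :: "(nat \<Rightarrow> nat) \<Rightarrow> bool" where
  "poly_bounded t \<longleftrightarrow> (\<exists>c. \<forall>n. t n \<le> (n + 2) ^ c)"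

definition p_family :: "(nat \<Rightarrow> 'k::field mpoly) \<Rightarrow> bool" where
  "p_family f \<longleftrightarrow> (\<exists>b. poly_bounded b \<and> (\<forall>n. card (pvars (f n)) \<le> b n \<and> pdeg (f n) \<le> b n))"

definition p_projection :: "(nat \<Rightarrow> 'k::field mpoly) \<Rightarrow> (nat \<Rightarrow> 'k mpoly) \<Rightarrow> bool" where
  "p_projection f g \<longleftrightarrow> (\<exists>t. poly_bounded t \<and> (\<forall>n. is_projection (f n) (g (t n))))"

datatype 'k gate = GVar nat | GConst 'k | GAdd nat nat | GMul nat nat

definition is_input_gate :: "'k gate \<Rightarrow> bool" where
  "is_input_gate g \<longleftrightarrow> (case g of GVar _ \<Rightarrow> True | GConst _ \<Rightarrow> True | _ \<Rightarrow> False)"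

definition circuit_wf :: "'k gate list \<Rightarrow> bool" where
  "circuit_wf C \<longleftrightarrow> C \<noteq> [] \<and> (\<forall>i<length C. case C ! i of
       GAdd j l \<Rightarrow> j < i \<and> l < i
     | GMul j l \<Rightarrow> j < i \<and> l < i
     | _ \<Rightarrow> True)"

definition circuit_skew :: "'k gate list \<Rightarrow> bool" where
  "circuit_skew C \<longleftrightarrow> (\<forall>i<length C. case C ! i of
       GMul j l \<Rightarrow> is_input_gate (C ! j) \<or> is_input_gate (C ! l)
     | _ \<Rightarrow> True)"

fun gate_val :: "'k::field mpoly list \<Rightarrow> 'k gate \<Rightarrow> 'k mpoly" where
  "gate_val vs (GVar v) = pVar v"
| "gate_val vs (GConst c) = pConst c"
| "gate_val vs (GAdd j l) = vs ! j + vs ! l"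
| "gate_val vs (GMul j l) = vs ! j * vs ! l"

definition circuit_vals :: "'k::field gate list \<Rightarrow> 'k mpoly list" where
  "circuit_vals C = foldl (\<lambda>vs g. vs @ [gate_val vs g]) [] C"

definition circuit_output :: "'k::field gate list \<Rightarrow> 'k mpoly" where
  "circuit_output C = last (circuit_vals C)"

definition VBP :: "(nat \<Rightarrow> 'k::field mpoly) set" where
  "VBP = {f. p_family f \<and>
     (\<exists>s. poly_bounded s \<and> (\<forall>n. \<exists>C. circuit_wf C \<and> circuit_skew C \<and>
            length C \<le> s n \<and> circuit_output C = f n))}"

definition VBP_complete :: "(nat \<Rightarrow> 'k::field mpoly) \<Rightarrow> bool" where
  "VBP_complete f \<longleftrightarrow> f \<in> VBP \<and> (\<forall>g\<in>VBP. p_projection g f)"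

text \<open>Undirected edge variable Y_{a,b} for the edge {a,b} of the complete graph.\<close>
definition edge_var :: "nat \<Rightarrow> nat \<Rightarrow> 'k::field mpoly" where
  "edge_var a b = pVar (prod_encode (min a b, max a b))"

text \<open>G_k: simple cycle on vertices 0..2k with edges {i, (i+1) mod (2k+1)};
  H_k: complete graph (no loops) on (2k+1)^2 vertices.\<close>
definition cycle_hom_poly :: "nat \<Rightarrow> 'k::field mpoly" where
  "cycle_hom_poly k =
     (let m = 2 * k + 1; n = m ^ 2 in
      \<Sum>\<phi>\<in>{\<phi>\<in>{0..<m} \<rightarrow>\<^sub>E {0..<n}. \<forall>i<m. \<phi> i \<noteq> \<phi> ((i + 1) mod m)}.
        \<Prod>i<m. edge_var (\<phi> i) (\<phi> ((i + 1) mod m)))"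

end

theory Submission
  imports Defs
begin

text \<open>
  Membership: with \<open>Y\<close> the loopless symbolic adjacency matrix of \<open>K\<^sub>N\<close>, the polynomial is
  \<open>tr (Y\<^sup>m)\<close> (\<open>m = 2k+1\<close>, \<open>N = m\<^sup>2\<close>), which a skew circuit computes by \<open>N\<close> chains of
  matrix-vector products.

  Hardness: a skew circuit with \<open>L\<close> gates is a layered graph on the gates plus a source \<open>L\<close>,
  in which the weighted walks of length \<open>r\<close> from \<open>L\<close> to a gate \<open>v < r\<close> sum to the value of \<open>v\<close>;
  one extra edge from the output gate back to \<open>L\<close> turns the output into a sum over closed walks
  of length \<open>m > L\<close>. Write the vertices of \<open>K\<^bsub>m\<^sup>2\<^esub>\<close> as pairs (layer, gate) with \<open>m\<close> layers in
  cyclic order and substitute, for the edge variables, the walk weights between cyclically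
  adjacent layers and \<open>0\<close> otherwise. Since \<open>m\<close> is odd, a homomorphic image of the \<open>m\<close>-cycle with
  nonzero weight runs once around the layers, forwards or backwards; choosing the starting layer
  and the direction, every closed walk is counted \<open>2m\<close> times. Choosing \<open>k\<close> with \<open>2m \<noteq> 0\<close> in
  the field (possible since the characteristic is not \<open>2\<close>), the scaled edge weights make the
  projection equal to the circuit output.
\<close>

section \<open>Substitution is a ring homomorphism\<close>

definition subst_monom :: "(nat \<Rightarrow> 'k::field mpoly) \<Rightarrow> (nat \<Rightarrow>\<^sub>0 nat) \<Rightarrow> 'k mpoly" where
  "subst_monom \<sigma> m = (\<Prod>v\<in>Poly_Mapping.keys m. \<sigma> v ^ Poly_Mapping.lookup m v)"

lemma subst_monom_superset:
  assumes "finite S" "Poly_Mapping.keys m \<subseteq> S"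
  shows "subst_monom \<sigma> m = (\<Prod>v\<in>S. \<sigma> v ^ Poly_Mapping.lookup m v)"
  unfolding subst_monom_def
  by (rule prod.mono_neutral_left[OF assms]) (auto simp: in_keys_iff)

lemma subst_monom_add: "subst_monom \<sigma> (a + b) = subst_monom \<sigma> a * subst_monom \<sigma> b"
proof -
  let ?S = "Poly_Mapping.keys a \<union> Poly_Mapping.keys b"
  have "subst_monom \<sigma> (a + b) = (\<Prod>v\<in>?S. \<sigma> v ^ Poly_Mapping.lookup (a + b) v)"
    by (rule subst_monom_superset) (simp_all add: keys_add)
  also have "\<dots> = (\<Prod>v\<in>?S. \<sigma> v ^ Poly_Mapping.lookup a v) * (\<Prod>v\<in>?S. \<sigma> v ^ Poly_Mapping.lookup b v)"
    by (simp add: lookup_add power_add prod.distrib)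
  also have "\<dots> = subst_monom \<sigma> a * subst_monom \<sigma> b"
    by (simp add: subst_monom_superset[symmetric])
  finally show ?thesis .
qed

lemma pConst_add: "pConst (a + b) = pConst a + pConst b"
  by (simp add: pConst_def single_add)

lemma pConst_mult: "pConst (a * b) = pConst a * pConst b"
  by (simp add: pConst_def mult_single)

lemma pConst_0 [simp]: "pConst 0 = 0"
  by (simp add: pConst_def)

lemma pConst_1 [simp]: "pConst 1 = 1"
  by (simp add: pConst_def)

lemma pConst_of_nat: "pConst (of_nat n) = of_nat n"
  by (simp add: pConst_def)

lemma psubst_superset:
  assumes "finite S" "Poly_Mapping.keys p \<subseteq> S"
  shows "psubst \<sigma> p = (\<Sum>m\<in>S. pConst (Poly_Mapping.lookup p m) * subst_monom \<sigma> m)"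
  unfolding psubst_def subst_monom_def[symmetric]
  by (rule sum.mono_neutral_left[OF assms]) (auto simp: in_keys_iff)

lemma psubst_add: "psubst \<sigma> (p + q) = psubst \<sigma> p + psubst \<sigma> q"
proof -
  let ?S = "Poly_Mapping.keys p \<union> Poly_Mapping.keys q"
  let ?t = "\<lambda>p m. pConst (Poly_Mapping.lookup p m) * subst_monom \<sigma> m"
  have "psubst \<sigma> (p + q) = (\<Sum>m\<in>?S. ?t (p + q) m)"
    by (rule psubst_superset) (simp_all add: keys_add)
  also have "\<dots> = (\<Sum>m\<in>?S. ?t p m) + (\<Sum>m\<in>?S. ?t q m)"
    by (simp add: lookup_add pConst_add distrib_right sum.distrib)
  also have "\<dots> = psubst \<sigma> p + psubst \<sigma> q"
    by (simp add: psubst_superset[symmetric])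
  finally show ?thesis .
qed

lemma psubst_0 [simp]: "psubst \<sigma> 0 = 0"
  by (simp add: psubst_def)

lemma psubst_sum: "psubst \<sigma> (sum f A) = (\<Sum>a\<in>A. psubst \<sigma> (f a))"
  by (induction A rule: infinite_finite_induct) (auto simp: psubst_add)

lemma psubst_single: "psubst \<sigma> (Poly_Mapping.single m c) = pConst c * subst_monom \<sigma> m"
  using psubst_superset[of "{m}" "Poly_Mapping.single m c" \<sigma>] by simp

lemma poly_mapping_sum_single:
  "(p::'a \<Rightarrow>\<^sub>0 'b::comm_monoid_add) = (\<Sum>m\<in>Poly_Mapping.keys p. Poly_Mapping.single m (Poly_Mapping.lookup p m))"
  by (rule poly_mapping_eqI)
     (auto simp: lookup_sum lookup_single when_def in_keys_iff sum.delta' split: if_splits)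

lemma psubst_eq_sum_single:
  "psubst \<sigma> p = (\<Sum>m\<in>Poly_Mapping.keys p. psubst \<sigma> (Poly_Mapping.single m (Poly_Mapping.lookup p m)))"
  by (subst poly_mapping_sum_single) (simp only: psubst_sum)

lemma psubst_mult: "psubst \<sigma> (p * q) = psubst \<sigma> p * psubst \<sigma> q"
proof -
  let ?s = "\<lambda>p m. Poly_Mapping.single m (Poly_Mapping.lookup p m)"
  have pq: "p * q = (\<Sum>m\<in>Poly_Mapping.keys p. \<Sum>m'\<in>Poly_Mapping.keys q. ?s p m * ?s q m')"
    by (subst (1 2) poly_mapping_sum_single)
       (simp add: sum_distrib_left sum_distrib_right sum.swap[of _ "Poly_Mapping.keys q"])
  have single: "psubst \<sigma> (Poly_Mapping.single m a * Poly_Mapping.single m' b) =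
     psubst \<sigma> (Poly_Mapping.single m a) * psubst \<sigma> (Poly_Mapping.single m' b)" for m m' a b
    by (simp add: mult_single psubst_single subst_monom_add pConst_mult mult_ac)
  show ?thesis
    unfolding pq psubst_eq_sum_single[of \<sigma> p] psubst_eq_sum_single[of \<sigma> q]
    by (simp only: psubst_sum single sum_distrib_left sum_distrib_right) (rule sum.swap)
qed

lemma psubst_1 [simp]: "psubst \<sigma> 1 = 1"
  using psubst_single[of \<sigma> 0 1] by (simp del: single_one add: single_one[symmetric] subst_monom_def)

lemma psubst_prod: "psubst \<sigma> (prod f A) = (\<Prod>a\<in>A. psubst \<sigma> (f a))"
  by (induction A rule: infinite_finite_induct) (auto simp: psubst_mult)

lemma psubst_pVar [simp]: "psubst \<sigma> (pVar i) = \<sigma> i"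
  by (simp add: pVar_def psubst_single subst_monom_def)

section \<open>Evaluating circuits gate by gate\<close>

definition gate_sem :: "(nat \<Rightarrow> 'k::field mpoly) \<Rightarrow> 'k gate \<Rightarrow> 'k mpoly" where
  "gate_sem V g = (case g of GVar v \<Rightarrow> pVar v | GConst c \<Rightarrow> pConst c
     | GAdd j l \<Rightarrow> V j + V l | GMul j l \<Rightarrow> V j * V l)"

definition gate_args_below :: "nat \<Rightarrow> 'k gate \<Rightarrow> bool" where
  "gate_args_below i g = (case g of GAdd j l \<Rightarrow> j < i \<and> l < i | GMul j l \<Rightarrow> j < i \<and> l < i | _ \<Rightarrow> True)"

lemma circuit_wf_iff: "circuit_wf C \<longleftrightarrow> C \<noteq> [] \<and> (\<forall>i<length C. gate_args_below i (C ! i))"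
  unfolding circuit_wf_def gate_args_below_def by simp

lemma circuit_vals_snoc: "circuit_vals (C @ [g]) = circuit_vals C @ [gate_val (circuit_vals C) g]"
  by (simp add: circuit_vals_def)

lemma length_circuit_vals [simp]: "length (circuit_vals C) = length C"
  by (induction C rule: rev_induct) (simp_all add: circuit_vals_snoc, simp add: circuit_vals_def)

lemma circuit_vals_append: "\<exists>X. circuit_vals (A @ B) = circuit_vals A @ X"
proof -
  have "\<exists>X. foldl (\<lambda>vs g. vs @ [gate_val vs g]) vs B = vs @ X" for vs
    by (induction B arbitrary: vs) (auto, metis append.assoc)
  then show ?thesis unfolding circuit_vals_def foldl_append .
qed

lemma circuit_vals_nth:
  assumes "i < length C"
  shows "circuit_vals C ! i = gate_val (take i (circuit_vals C)) (C ! i)"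
proof -
  have "C = (take i C @ [C ! i]) @ drop (Suc i) C"
    using assms by (simp add: Cons_nth_drop_Suc)
  then obtain X where X: "circuit_vals C =
      (circuit_vals (take i C) @ [gate_val (circuit_vals (take i C)) (C ! i)]) @ X"
    using circuit_vals_append[of "take i C @ [C ! i]" "drop (Suc i) C"] circuit_vals_snoc by metis
  have "length (circuit_vals (take i C)) = i" using assms by simp
  with X show ?thesis by (simp add: nth_append)
qed

lemma circuit_vals_gate_sem:
  assumes "circuit_wf C" "i < length C"
  shows "circuit_vals C ! i = gate_sem (\<lambda>j. circuit_vals C ! j) (C ! i)"
proof -
  have "gate_args_below i (C ! i)" using assms by (simp add: circuit_wf_iff)
  then show ?thesis
    using circuit_vals_nth[OF assms(2)] assms(2)
    by (cases "C ! i") (simp_all add: gate_sem_def gate_args_below_def)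
qed

lemma circuit_output_eq_nth:
  assumes "circuit_wf C"
  shows "circuit_output C = circuit_vals C ! (length C - 1)"
  using assms unfolding circuit_output_def circuit_wf_def
  by (metis last_conv_nth length_circuit_vals length_0_conv)

lemma circuit_output_eqI:
  assumes wf: "circuit_wf C" and V: "\<And>i. i < length C \<Longrightarrow> V i = gate_sem V (C ! i)"
  shows "circuit_output C = V (length C - 1)"
proof -
  have "circuit_vals C ! i = V i" if "i < length C" for i
    using that
  proof (induction i rule: less_induct)
    case (less i)
    have "gate_args_below i (C ! i)" using wf less by (simp add: circuit_wf_iff)
    then have "gate_sem (\<lambda>j. circuit_vals C ! j) (C ! i) = gate_sem V (C ! i)"
      using less by (cases "C ! i") (auto simp: gate_sem_def gate_args_below_def)
    then show ?case using circuit_vals_gate_sem[OF wf less.prems] V[OF less.prems] by simp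
  qed
  moreover have "C \<noteq> []" using wf by (simp add: circuit_wf_def)
  ultimately show ?thesis by (simp add: circuit_output_eq_nth[OF wf])
qed

section \<open>Sums over walks in layered graphs\<close>

text \<open>\<open>F i w v\<close> is the weight of the \<open>i\<close>-th step of a walk, from \<open>w\<close> to \<open>v\<close>.\<close>

definition walk_sum :: "(nat \<Rightarrow> 'b \<Rightarrow> 'b \<Rightarrow> 'a::comm_ring_1) \<Rightarrow> 'b set \<Rightarrow> 'b \<Rightarrow> nat \<Rightarrow> 'b \<Rightarrow> 'a" where
  "walk_sum F S s n v = (\<Sum>u\<in>{0..<Suc n} \<rightarrow>\<^sub>E S.
     (if u 0 = s \<and> u n = v then 1 else 0) * (\<Prod>i<n. F i (u i) (u (Suc i))))"

definition closed_walk_weight :: "(nat \<Rightarrow> 'b \<Rightarrow> 'b \<Rightarrow> 'a::comm_monoid_mult) \<Rightarrow> nat \<Rightarrow> (nat \<Rightarrow> 'b) \<Rightarrow> 'a" where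
  "closed_walk_weight F m u = (\<Prod>i<m. F i (u i) (u ((i + 1) mod m)))"

lemma closed_walk_weight_eq_0:
  fixes F :: "nat \<Rightarrow> 'b \<Rightarrow> 'b \<Rightarrow> 'a::comm_semiring_1"
  assumes "i < m" "F i (u i) (u ((i + 1) mod m)) = 0"
  shows "closed_walk_weight F m u = 0"
  unfolding closed_walk_weight_def using assms
  by (intro prod_zero) (auto simp del: mod_Suc intro!: bexI[of _ i])

lemma sum_PiE_Suc:
  "(\<Sum>u\<in>{0..<Suc n} \<rightarrow>\<^sub>E S. f u) = (\<Sum>y\<in>S. \<Sum>g\<in>{0..<n} \<rightarrow>\<^sub>E S. f (g(n := y)))"
proof -
  have "(\<Sum>u\<in>{0..<Suc n} \<rightarrow>\<^sub>E S. f u) = (\<Sum>u\<in>(\<lambda>(y, g). g(n := y)) ` (S \<times> ({0..<n} \<rightarrow>\<^sub>E S)). f u)"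
    by (simp add: atLeast0_lessThan_Suc PiE_insert_eq)
  also have "\<dots> = (\<Sum>p\<in>S \<times> ({0..<n} \<rightarrow>\<^sub>E S). f ((\<lambda>(y, g). g(n := y)) p))"
    by (rule sum.reindex_cong[OF inj_combinator]) auto
  also have "\<dots> = (\<Sum>y\<in>S. \<Sum>g\<in>{0..<n} \<rightarrow>\<^sub>E S. f (g(n := y)))"
    by (subst sum.cartesian_product) (simp add: split_def)
  finally show ?thesis .
qed

lemma sum_mult_delta:
  fixes P :: "'b \<Rightarrow> 'a::comm_ring_1"
  assumes "finite S" "a \<in> S"
  shows "(\<Sum>w\<in>S. P w * (if w = a then X else 0)) = P a * X"
  using assms by (simp add: if_distrib[of "\<lambda>x. _ * x"] sum.delta cong: if_cong)

lemma sum_sum_delta: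
  fixes X :: "'b \<Rightarrow> 'b \<Rightarrow> 'a::comm_ring_1"
  assumes "finite S" "a \<in> S" "b \<in> S"
  shows "(\<Sum>s\<in>S. \<Sum>v\<in>S. (if a = s \<and> b = v then 1 else 0) * X v s) = X b a"
proof -
  have "(\<Sum>v\<in>S. (if a = s \<and> b = v then 1 else 0) * X v s) = (if a = s then X b s else 0)" for s
    using assms by (cases "a = s") (simp_all add: sum.delta' if_distrib[of "\<lambda>x. x * _"] cong: if_cong)
  then show ?thesis using assms by (simp add: sum.delta')
qed

lemma walk_sum_0:
  assumes "finite S" "v \<in> S"
  shows "walk_sum F S s 0 v = (if s = v then 1 else 0)"
proof -
  have "walk_sum F S s 0 v = (\<Sum>y\<in>S. (if y = s \<and> y = v then 1 else 0))"
    unfolding walk_sum_def by (subst sum_PiE_Suc) simp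
  also have "\<dots> = (if s = v then 1 else 0)"
    using assms by (auto simp: sum.delta intro: sum.neutral)
  finally show ?thesis .
qed

lemma walk_sum_Suc:
  assumes "finite S" "v \<in> S"
  shows "walk_sum F S s (Suc n) v = (\<Sum>w\<in>S. walk_sum F S s n w * F n w v)"
proof -
  let ?W = "\<lambda>g. \<Prod>i<n. F i (g i) (g (Suc i))"
  have last_step: "(\<Prod>i<Suc n. F i ((g(Suc n := y)) i) ((g(Suc n := y)) (Suc i))) = ?W g * F n (g n) y"
    for g y by (simp add: prod.lessThan_Suc)
  have "walk_sum F S s (Suc n) v = (\<Sum>y\<in>S. \<Sum>g\<in>{0..<Suc n} \<rightarrow>\<^sub>E S.
      (if g 0 = s \<and> y = v then 1 else 0) * (?W g * F n (g n) y))"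
    unfolding walk_sum_def by (subst sum_PiE_Suc) (simp add: last_step)
  also have "\<dots> = (\<Sum>g\<in>{0..<Suc n} \<rightarrow>\<^sub>E S. (if g 0 = s then 1 else 0) * (?W g * F n (g n) v))"
  proof -
    have if_conj: "(if P \<and> y = v then X else 0) = (if y = v then (if P then X else 0) else 0)"
      for P y X by simp
    show ?thesis
      using assms by (subst sum.swap)
        (simp add: if_distrib[of "\<lambda>x. x * _"] if_conj sum.delta cong: if_cong)
  qed
  also have "\<dots> = (\<Sum>g\<in>{0..<Suc n} \<rightarrow>\<^sub>E S. \<Sum>w\<in>S. (if g 0 = s \<and> g n = w then 1 else 0) * ?W g * F n w v)"
  proof (rule sum.cong[OF refl])
    fix g assume "g \<in> {0..<Suc n} \<rightarrow>\<^sub>E S"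
    then have "g n \<in> S" by auto
    then show "(if g 0 = s then 1 else 0) * (?W g * F n (g n) v) =
      (\<Sum>w\<in>S. (if g 0 = s \<and> g n = w then 1 else 0) * ?W g * F n w v)"
      using assms(1) by (simp add: if_distrib[of "\<lambda>x. x * _"] sum.delta cong: if_cong)
  qed
  also have "\<dots> = (\<Sum>w\<in>S. walk_sum F S s n w * F n w v)"
    unfolding walk_sum_def by (simp only: sum_distrib_right) (rule sum.swap)
  finally show ?thesis .
qed

lemma sum_closed_walk_weight:
  assumes "finite S"
  shows "(\<Sum>u\<in>{0..<Suc n} \<rightarrow>\<^sub>E S. closed_walk_weight F (Suc n) u) =
         (\<Sum>s\<in>S. \<Sum>v\<in>S. walk_sum F S s n v * F n v s)"
proof -
  let ?W = "\<lambda>u. \<Prod>i<n. F i (u i) (u (Suc i))"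
  have split: "closed_walk_weight F (Suc n) u = ?W u * F n (u n) (u 0)" for u
  proof -
    have "(\<Prod>i<n. F i (u i) (u ((i + 1) mod Suc n))) = ?W u"
      by (rule prod.cong) auto
    then show ?thesis by (simp add: closed_walk_weight_def prod.lessThan_Suc)
  qed
  have "(\<Sum>s\<in>S. \<Sum>v\<in>S. walk_sum F S s n v * F n v s) = (\<Sum>u\<in>{0..<Suc n} \<rightarrow>\<^sub>E S.
      \<Sum>s\<in>S. \<Sum>v\<in>S. (if u 0 = s \<and> u n = v then 1 else 0) * ?W u * F n v s)"
    unfolding walk_sum_def sum_distrib_right by (subst sum.swap) (rule sum.swap)
  also have "\<dots> = (\<Sum>u\<in>{0..<Suc n} \<rightarrow>\<^sub>E S. ?W u * F n (u n) (u 0))"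
  proof (rule sum.cong[OF refl])
    fix u assume "u \<in> {0..<Suc n} \<rightarrow>\<^sub>E S"
    then have "u 0 \<in> S" "u n \<in> S" by auto
    then show "(\<Sum>s\<in>S. \<Sum>v\<in>S. (if u 0 = s \<and> u n = v then 1 else 0) * ?W u * F n v s) =
        ?W u * F n (u n) (u 0)"
      using assms sum_sum_delta[of S "u 0" "u n" "\<lambda>v s. ?W u * F n v s"] by (simp add: mult.assoc)
  qed
  finally show ?thesis by (simp add: split)
qed

section \<open>Odd cycles in the cyclically layered complete graph\<close>

text \<open>A vertex \<open>a < m * m\<close> lies in layer \<open>a div m\<close>, and layers are arranged in a cycle of
  length \<open>m\<close>.\<close>

definition layer_fwd :: "nat \<Rightarrow> (nat \<Rightarrow> nat) \<Rightarrow> nat \<Rightarrow> bool" where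
  "layer_fwd m \<phi> i \<longleftrightarrow> \<phi> ((i + 1) mod m) div m = Suc (\<phi> i div m) mod m"

definition layer_bwd :: "nat \<Rightarrow> (nat \<Rightarrow> nat) \<Rightarrow> nat \<Rightarrow> bool" where
  "layer_bwd m \<phi> i \<longleftrightarrow> \<phi> i div m = Suc (\<phi> ((i + 1) mod m) div m) mod m"

lemma sum_signs_dvd_odd:
  assumes odd: "odd m" and dvd: "int m dvd (\<Sum>j<m. if P j then 1 else -1::int)"
  shows "(\<forall>j<m. P j) \<or> (\<forall>j<m. \<not> P j)"
proof -
  define c where "c = card {j\<in>{..<m}. P j}"
  have c_le: "c \<le> m" unfolding c_def
    using card_mono[of "{..<m}" "{j\<in>{..<m}. P j}"] by auto
  have "(\<Sum>j<m. if P j then 1 else -1::int) = (\<Sum>j<m. 2 * (if P j then 1 else 0) - 1)"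
    by (rule sum.cong) auto
  also have "\<dots> = 2 * (\<Sum>j<m. (if P j then 1 else 0::int)) - int m"
    by (simp add: sum_subtractf sum_distrib_left)
  also have "(\<Sum>j<m. (if P j then 1 else 0::int)) = int c"
    unfolding c_def by (simp add: sum.If_cases Int_def conj_commute)
  finally have "int m dvd (2 * int c - int m) + int m"
    using dvd by (intro dvd_add) simp_all
  then have "m dvd 2 * c" by (simp flip: int_dvd_int_iff)
  then have "m dvd c" using odd by (simp add: coprime_dvd_mult_right_iff)
  then have "c = 0 \<or> c = m" using c_le by (auto dest: dvd_imp_le)
  then show ?thesis
  proof
    assume "c = 0"
    then show ?thesis unfolding c_def by auto
  next
    assume "c = m"
    then have "{j\<in>{..<m}. P j} = {..<m}" unfolding c_def
      using card_subset_eq[of "{..<m}" "{j\<in>{..<m}. P j}"] by auto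
    then show ?thesis by auto
  qed
qed

text \<open>A closed walk that moves one layer forwards or backwards at each step winds around the
  layers an integral number of times.\<close>

lemma layer_winding_dvd:
  assumes steps: "\<forall>i<m. layer_fwd m \<phi> i \<or> layer_bwd m \<phi> i"
  shows "int m dvd (\<Sum>j<m. if layer_fwd m \<phi> j then 1 else -1::int)"
proof -
  define L where "L i = int (\<phi> (i mod m) div m)" for i
  define d where "d i = (if layer_fwd m \<phi> i then 1 else -1::int)" for i
  have dvd_mod_diff: "int m dvd (x mod int m) - x" for x :: int
    by (simp only: mod_eq_dvd_iff[symmetric] mod_mod_trivial)
  have step: "int m dvd L (Suc i) - L i - d i" if "i < m" for i
  proof (cases "layer_fwd m \<phi> i")
    case True
    then have "L (Suc i) = (L i + 1) mod int m"
      using that by (simp add: layer_fwd_def L_def zmod_int add.commute)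
    then have "L (Suc i) - L i - d i = ((L i + 1) mod int m) - (L i + 1)"
      using True by (simp add: d_def)
    then show ?thesis using dvd_mod_diff[of "L i + 1"] by (simp only:)
  next
    case False
    then have "layer_bwd m \<phi> i" using steps that by auto
    then have "L i = (L (Suc i) + 1) mod int m"
      using that by (simp add: layer_bwd_def L_def zmod_int add.commute)
    then have "L (Suc i) - L i - d i = - (((L (Suc i) + 1) mod int m) - (L (Suc i) + 1))"
      using False by (simp add: d_def)
    then show ?thesis using dvd_mod_diff[of "L (Suc i) + 1"] by (simp only: dvd_minus_iff)
  qed
  have "int m dvd L i - L 0 - (\<Sum>j<i. d j)" if "i \<le> m" for i
    using that
  proof (induction i)
    case (Suc i)
    have "int m dvd (L i - L 0 - (\<Sum>j<i. d j)) + (L (Suc i) - L i - d i)"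
      using Suc step by (intro dvd_add) auto
    then show ?case by (simp add: algebra_simps)
  qed simp
  moreover have "L m = L 0" by (simp add: L_def)
  ultimately show ?thesis unfolding d_def by (metis diff_self diff_0 dvd_minus_iff order_refl)
qed

lemma odd_cycle_layer_steps:
  assumes "odd m" "\<forall>i<m. layer_fwd m \<phi> i \<or> layer_bwd m \<phi> i"
  shows "(\<forall>i<m. layer_fwd m \<phi> i) \<or> (\<forall>i<m. layer_bwd m \<phi> i)"
  using sum_signs_dvd_odd[OF assms(1) layer_winding_dvd[OF assms(2)]] assms(2) by blast

lemma mod_unshift_shift: "j < m \<Longrightarrow> r < m \<Longrightarrow> ((j + m - r) mod m + r) mod m = (j::nat)"
  by (simp add: mod_add_left_eq)

lemma mod_shift_unshift: "i < m \<Longrightarrow> r < m \<Longrightarrow> ((i + r) mod m + m - r) mod m = (i::nat)"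
proof -
  assume "i < m" "r < m"
  then have "((i + r) mod m + m - r) mod m = ((i + r) mod m + (m - r)) mod m" by simp
  also have "\<dots> = (i + r + (m - r)) mod m" by (simp add: mod_add_left_eq)
  also have "\<dots> = (i + m) mod m" using \<open>r < m\<close> by simp
  finally show ?thesis using \<open>i < m\<close> by simp
qed

lemma mod_shift_Suc: "((i + 1) mod m + r) mod m = Suc ((i + r) mod m) mod (m::nat)"
  by (simp add: mod_add_left_eq mod_Suc_eq)

lemma mult_add_less_mult: "a < n \<Longrightarrow> b < m \<Longrightarrow> a * m + b < n * (m::nat)"
proof -
  assume "a < n" "b < m"
  then have "a * m + b < (a + 1) * m" by simp
  also have "\<dots> \<le> n * m" using \<open>a < n\<close> by (intro mult_le_mono1) simp
  finally show ?thesis .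
qed

lemma Suc_mod_not_mutual:
  assumes "x < m" "3 \<le> m" "y = Suc x mod m" "x = Suc y mod (m::nat)"
  shows False
proof (cases "Suc x < m")
  case True
  then have "y = Suc x" using assms(3) by simp
  with assms(4) have x: "x = Suc (Suc x) mod m" by simp
  show False
  proof (cases "Suc (Suc x) < m")
    case True
    then show False using x by simp
  next
    case False
    then have e: "Suc (Suc x) = m" using \<open>Suc x < m\<close> by simp
    then have "x = 0" using x by simp
    then show False using e assms(2) by simp
  qed
next
  case False
  then have e: "Suc x = m" using assms(1) by simp
  then have "y = 0" using assms(3) by simp
  then have "x = 1 mod m" using assms(4) by simp
  then show False using e assms(2) by simp
qed

definition layer_edge :: "nat \<Rightarrow> (nat \<Rightarrow> nat \<Rightarrow> nat \<Rightarrow> 'a::comm_ring_1) \<Rightarrow> nat \<Rightarrow> nat \<Rightarrow> 'a" where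
  "layer_edge m F a b =
    (if b div m = Suc (a div m) mod m then F (a div m) (a mod m) (b mod m)
     else if a div m = Suc (b div m) mod m then F (b div m) (b mod m) (a mod m) else 0)"

lemma layer_edge_sym:
  assumes "a < m * m" "3 \<le> m"
  shows "layer_edge m F a b = layer_edge m F b a"
proof -
  have "a div m < m" using assms by (simp add: less_mult_imp_div_less)
  then have "\<not> (b div m = Suc (a div m) mod m \<and> a div m = Suc (b div m) mod m)"
    using Suc_mod_not_mutual assms(2) by blast
  then show ?thesis unfolding layer_edge_def by auto
qed

lemma layer_edge_diag:
  assumes "a < m * m" "2 \<le> m"
  shows "layer_edge m F a a = 0"
proof -
  have "a div m < m" using assms by (simp add: less_mult_imp_div_less)
  then have "Suc (a div m) mod m \<noteq> a div m"
  proof (cases "Suc (a div m) < m")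
    case False
    then have "Suc (a div m) = m" using \<open>a div m < m\<close> by simp
    then show ?thesis using assms(2) by auto
  qed simp
  then show ?thesis unfolding layer_edge_def by metis
qed

definition fwd_homs :: "nat \<Rightarrow> (nat \<Rightarrow> nat) set" where
  "fwd_homs m = {\<phi>\<in>{0..<m} \<rightarrow>\<^sub>E {0..<m*m}. \<forall>i<m. layer_fwd m \<phi> i}"

definition bwd_homs :: "nat \<Rightarrow> (nat \<Rightarrow> nat) set" where
  "bwd_homs m = {\<phi>\<in>{0..<m} \<rightarrow>\<^sub>E {0..<m*m}. \<forall>i<m. layer_bwd m \<phi> i}"

lemma fwd_homs_layer:
  assumes "\<phi> \<in> fwd_homs m" "i < m"
  shows "\<phi> i div m = (i + \<phi> 0 div m) mod m"
  using assms(2)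
proof (induction i)
  case 0
  have "\<phi> 0 < m * m" using assms(1) 0 by (auto simp: fwd_homs_def)
  then show ?case by (simp add: less_mult_imp_div_less)
next
  case (Suc i)
  have "layer_fwd m \<phi> i" using assms(1) Suc by (auto simp: fwd_homs_def)
  then have "\<phi> (Suc i) div m = Suc (\<phi> i div m) mod m"
    using Suc.prems by (simp add: layer_fwd_def)
  also have "\<dots> = (Suc i + \<phi> 0 div m) mod m" using Suc by (simp add: mod_Suc_eq)
  finally show ?case .
qed

subsection \<open>Forward windings are rotated closed walks\<close>

text \<open>Step \<open>i\<close> of the closed walk \<open>u\<close> is placed in layer \<open>(i + r) mod m\<close>; the inverse
  reads \<open>r\<close> off the layer of \<open>\<phi> 0\<close>.\<close>

definition stack_walk :: "nat \<Rightarrow> nat \<times> (nat \<Rightarrow> nat) \<Rightarrow> (nat \<Rightarrow> nat)" where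
  "stack_walk m = (\<lambda>(r, u). restrict (\<lambda>i. ((i + r) mod m) * m + u ((i + r) mod m)) {0..<m})"

definition unstack_walk :: "nat \<Rightarrow> (nat \<Rightarrow> nat) \<Rightarrow> nat \<times> (nat \<Rightarrow> nat)" where
  "unstack_walk m \<phi> = (\<phi> 0 div m, restrict (\<lambda>j. \<phi> ((j + m - \<phi> 0 div m) mod m) mod m) {0..<m})"

context
  fixes m :: nat
  assumes m: "0 < m"
begin

lemma closed_walk_weight_stack_walk:
  assumes r: "r < m" and u: "u \<in> {0..<m} \<rightarrow>\<^sub>E {0..<m}"
  shows "closed_walk_weight (\<lambda>_. layer_edge m F) m (stack_walk m (r, u)) = closed_walk_weight F m u"
proof -
  let ?s = "\<lambda>i. (i + r) mod m"
  have "closed_walk_weight (\<lambda>_. layer_edge m F) m (stack_walk m (r, u)) =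
      (\<Prod>i<m. F (?s i) (u (?s i)) (u ((?s i + 1) mod m)))"
    unfolding closed_walk_weight_def
  proof (rule prod.cong[OF refl])
    fix i assume "i \<in> {..<m}"
    then have i: "i < m" by simp
    have "(i + 1) mod m < m" using m by simp
    then have "stack_walk m (r, u) ((i + 1) mod m) =
        (((i + 1) mod m + r) mod m) * m + u (((i + 1) mod m + r) mod m)"
      by (simp add: stack_walk_def)
    moreover have "((i + 1) mod m + r) mod m = (?s i + 1) mod m"
      using mod_shift_Suc[of i m r] by (simp add: mod_Suc_eq)
    ultimately have b: "stack_walk m (r, u) ((i + 1) mod m) = ((?s i + 1) mod m) * m + u ((?s i + 1) mod m)"
      by simp
    have a: "stack_walk m (r, u) i = ?s i * m + u (?s i)" using i by (simp add: stack_walk_def)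
    have "u (?s i) < m" "u ((?s i + 1) mod m) < m" using u m by auto
    then show "layer_edge m F (stack_walk m (r, u) i) (stack_walk m (r, u) ((i + 1) mod m)) =
        F (?s i) (u (?s i)) (u ((?s i + 1) mod m))"
      unfolding a b layer_edge_def by simp
  qed
  also have "\<dots> = closed_walk_weight F m u"
    unfolding closed_walk_weight_def
    by (rule prod.reindex_bij_witness[where i="\<lambda>j. (j + m - r) mod m" and j="?s"])
       (use r m in \<open>auto simp: mod_shift_unshift mod_unshift_shift\<close>)
  finally show ?thesis .
qed

lemma fwd_homs_layer0_less:
  assumes "\<phi> \<in> fwd_homs m"
  shows "\<phi> 0 div m < m"
proof -
  have "\<phi> 0 < m * m" using assms m by (auto simp: fwd_homs_def)
  then show ?thesis by (simp add: less_mult_imp_div_less)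
qed

lemma stack_unstack_walk:
  assumes f: "\<phi> \<in> fwd_homs m"
  shows "stack_walk m (unstack_walk m \<phi>) = \<phi>"
proof
  fix i
  define r where "r = \<phi> 0 div m"
  have r: "r < m" unfolding r_def by (rule fwd_homs_layer0_less[OF f])
  show "stack_walk m (unstack_walk m \<phi>) i = \<phi> i"
  proof (cases "i < m")
    case True
    have "(i + r) mod m < m" using m by simp
    then have "stack_walk m (unstack_walk m \<phi>) i = ((i + r) mod m) * m + \<phi> i mod m"
      using True r by (simp add: stack_walk_def unstack_walk_def r_def[symmetric] mod_shift_unshift)
    also have "\<dots> = (\<phi> i div m) * m + \<phi> i mod m"
      using fwd_homs_layer[OF f True] by (simp add: r_def)
    finally show ?thesis by simp
  next
    case False
    then show ?thesis using f
      by (auto simp: stack_walk_def unstack_walk_def fwd_homs_def PiE_def extensional_def)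
  qed
qed

lemma unstack_stack_walk:
  assumes r: "r < m" and u: "u \<in> {0..<m} \<rightarrow>\<^sub>E {0..<m}"
  shows "unstack_walk m (stack_walk m (r, u)) = (r, u)"
proof -
  have "u r < m" using u r by auto
  then have layer: "stack_walk m (r, u) 0 div m = r" using m r by (simp add: stack_walk_def)
  have "restrict (\<lambda>j. stack_walk m (r, u) ((j + m - r) mod m) mod m) {0..<m} = u"
  proof
    fix j
    show "restrict (\<lambda>j. stack_walk m (r, u) ((j + m - r) mod m) mod m) {0..<m} j = u j"
    proof (cases "j < m")
      case True
      have "(j + m - r) mod m < m" "u j < m" using m u True by auto
      then show ?thesis using True r by (simp add: stack_walk_def mod_unshift_shift)
    next
      case False
      then show ?thesis using u by (auto simp: PiE_def extensional_def)
    qed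
  qed
  then show ?thesis using layer by (simp add: unstack_walk_def)
qed

lemma stack_walk_in_fwd_homs:
  assumes r: "r < m" and u: "u \<in> {0..<m} \<rightarrow>\<^sub>E {0..<m}"
  shows "stack_walk m (r, u) \<in> fwd_homs m"
  unfolding fwd_homs_def
proof (intro CollectI conjI allI impI PiE_I)
  fix i assume "i \<in> {0..<m}"
  then show "stack_walk m (r, u) i \<in> {0..<m * m}"
    using m u by (auto simp: stack_walk_def intro!: mult_add_less_mult)
next
  fix i assume "i \<notin> {0..<m}"
  then show "stack_walk m (r, u) i = undefined" by (simp add: stack_walk_def)
next
  fix i assume i: "i < m"
  have "(i + 1) mod m < m" "u ((i + r) mod m) < m" "u (((i + 1) mod m + r) mod m) < m"
    using m u by auto
  then have "stack_walk m (r, u) ((i + 1) mod m) div m = ((i + 1) mod m + r) mod m"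
    "stack_walk m (r, u) i div m = (i + r) mod m"
    using i by (simp_all add: stack_walk_def)
  then show "layer_fwd m (stack_walk m (r, u)) i"
    unfolding layer_fwd_def using mod_shift_Suc by simp
qed

lemma sum_fwd_homs:
  "(\<Sum>\<phi>\<in>fwd_homs m. closed_walk_weight (\<lambda>_. layer_edge m F) m \<phi>) =
     of_nat m * (\<Sum>u\<in>{0..<m} \<rightarrow>\<^sub>E {0..<m}. closed_walk_weight F m u)"
proof -
  let ?D = "{0..<m} \<times> ({0..<m} \<rightarrow>\<^sub>E {0..<m})"
  have unstack_in: "unstack_walk m \<phi> \<in> ?D" if "\<phi> \<in> fwd_homs m" for \<phi>
    using fwd_homs_layer0_less[OF that] m by (auto simp: unstack_walk_def)
  have "(\<Sum>\<phi>\<in>fwd_homs m. closed_walk_weight (\<lambda>_. layer_edge m F) m \<phi>) =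
      (\<Sum>p\<in>?D. closed_walk_weight F m (snd p))"
  proof (rule sum.reindex_bij_witness[where i="stack_walk m" and j="unstack_walk m"])
    fix \<phi> assume f: "\<phi> \<in> fwd_homs m"
    show "stack_walk m (unstack_walk m \<phi>) = \<phi>" by (rule stack_unstack_walk[OF f])
    show "unstack_walk m \<phi> \<in> ?D" by (rule unstack_in[OF f])
    show "closed_walk_weight F m (snd (unstack_walk m \<phi>)) =
        closed_walk_weight (\<lambda>_. layer_edge m F) m \<phi>"
      using closed_walk_weight_stack_walk[of "fst (unstack_walk m \<phi>)" "snd (unstack_walk m \<phi>)" F]
        unstack_in[OF f] stack_unstack_walk[OF f] by auto
  qed (auto simp: unstack_stack_walk stack_walk_in_fwd_homs)
  also have "\<dots> = (\<Sum>r\<in>{0..<m}. \<Sum>u\<in>{0..<m} \<rightarrow>\<^sub>E {0..<m}. closed_walk_weight F m u)"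
    by (simp only: sum.cartesian_product split_def)
  also have "\<dots> = of_nat m * (\<Sum>u\<in>{0..<m} \<rightarrow>\<^sub>E {0..<m}. closed_walk_weight F m u)"
    by simp
  finally show ?thesis .
qed

end

subsection \<open>Backward windings are reversed forward windings\<close>

definition reverse_walk :: "nat \<Rightarrow> (nat \<Rightarrow> nat) \<Rightarrow> (nat \<Rightarrow> nat)" where
  "reverse_walk m \<phi> = restrict (\<lambda>i. \<phi> ((m - i) mod m)) {0..<m}"

lemma reverse_walk_step:
  assumes "i < m"
  shows "reverse_walk m \<phi> i = \<phi> ((m - Suc i + 1) mod m)"
    "reverse_walk m \<phi> ((i + 1) mod m) = \<phi> (m - Suc i)"
proof -
  have "(m - i) mod m = (m - Suc i + 1) mod m" using assms by (simp add: Suc_diff_Suc)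
  then show "reverse_walk m \<phi> i = \<phi> ((m - Suc i + 1) mod m)"
    using assms by (simp add: reverse_walk_def)
  have "(m - (i + 1) mod m) mod m = m - Suc i" using assms by (cases "Suc i = m") auto
  then show "reverse_walk m \<phi> ((i + 1) mod m) = \<phi> (m - Suc i)"
    using assms by (simp add: reverse_walk_def)
qed

lemma reverse_walk_reverse_walk:
  assumes "\<phi> \<in> {0..<m} \<rightarrow>\<^sub>E A"
  shows "reverse_walk m (reverse_walk m \<phi>) = \<phi>"
proof
  fix i
  show "reverse_walk m (reverse_walk m \<phi>) i = \<phi> i"
  proof (cases "i < m")
    case True
    have "(m - (m - i) mod m) mod m = i" using True by (cases "i = 0") auto
    moreover have "(m - i) mod m < m" using True by simp
    ultimately show ?thesis using True by (simp add: reverse_walk_def)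
  next
    case False
    then show ?thesis using assms by (auto simp: reverse_walk_def PiE_def extensional_def)
  qed
qed

lemma reverse_walk_PiE: "\<phi> \<in> {0..<m} \<rightarrow>\<^sub>E A \<Longrightarrow> reverse_walk m \<phi> \<in> {0..<m} \<rightarrow>\<^sub>E A"
  by (auto simp: reverse_walk_def)

lemma layer_fwd_reverse_walk:
  "i < m \<Longrightarrow> layer_fwd m (reverse_walk m \<phi>) i \<longleftrightarrow> layer_bwd m \<phi> (m - Suc i)"
  unfolding layer_fwd_def layer_bwd_def by (simp only: reverse_walk_step)

lemma layer_bwd_reverse_walk:
  "i < m \<Longrightarrow> layer_bwd m (reverse_walk m \<phi>) i \<longleftrightarrow> layer_fwd m \<phi> (m - Suc i)"
  unfolding layer_fwd_def layer_bwd_def by (simp only: reverse_walk_step)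

lemma all_less_diff_Suc: "(\<forall>i<m. P (m - Suc i)) \<longleftrightarrow> (\<forall>j<(m::nat). P j)"
proof
  assume a: "\<forall>i<m. P (m - Suc i)"
  show "\<forall>j<m. P j"
  proof (intro allI impI)
    fix j assume "j < m"
    then have "m - Suc (m - Suc j) = j" "m - Suc j < m" by auto
    then show "P j" using a by metis
  qed
qed auto

lemma closed_walk_weight_reverse_walk:
  assumes \<phi>: "\<phi> \<in> {0..<m} \<rightarrow>\<^sub>E A" and sym: "\<And>a b. a \<in> A \<Longrightarrow> b \<in> A \<Longrightarrow> G a b = G b a"
  shows "closed_walk_weight (\<lambda>_. G) m (reverse_walk m \<phi>) = closed_walk_weight (\<lambda>_. G) m \<phi>"
proof -
  have "closed_walk_weight (\<lambda>_. G) m (reverse_walk m \<phi>) =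
      (\<Prod>i<m. G (\<phi> ((m - Suc i + 1) mod m)) (\<phi> (m - Suc i)))"
    unfolding closed_walk_weight_def by (rule prod.cong) (simp_all only: lessThan_iff reverse_walk_step)
  also have "\<dots> = (\<Prod>j<m. G (\<phi> ((j + 1) mod m)) (\<phi> j))"
    by (rule prod.nat_diff_reindex)
  also have "\<dots> = closed_walk_weight (\<lambda>_. G) m \<phi>"
    unfolding closed_walk_weight_def
  proof (rule prod.cong[OF refl])
    fix j assume "j \<in> {..<m}"
    then have "\<phi> j \<in> A" "\<phi> ((j + 1) mod m) \<in> A" using \<phi> by auto
    then show "G (\<phi> ((j + 1) mod m)) (\<phi> j) = G (\<phi> j) (\<phi> ((j + 1) mod m))" by (simp add: sym)
  qed
  finally show ?thesis .
qed

lemma sum_bwd_homs: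
  assumes "3 \<le> m"
  shows "(\<Sum>\<phi>\<in>bwd_homs m. closed_walk_weight (\<lambda>_. layer_edge m F) m \<phi>) =
    (\<Sum>\<phi>\<in>fwd_homs m. closed_walk_weight (\<lambda>_. layer_edge m F) m \<phi>)"
proof (rule sum.reindex_bij_witness[where i="reverse_walk m" and j="reverse_walk m"])
  fix \<phi> assume "\<phi> \<in> bwd_homs m"
  then have \<phi>: "\<phi> \<in> {0..<m} \<rightarrow>\<^sub>E {0..<m*m}" and "\<forall>i<m. layer_bwd m \<phi> i"
    by (auto simp: bwd_homs_def)
  then show "reverse_walk m \<phi> \<in> fwd_homs m"
    using reverse_walk_PiE[OF \<phi>] all_less_diff_Suc[where P="layer_bwd m \<phi>" and m=m]
    by (auto simp: fwd_homs_def layer_fwd_reverse_walk)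
  show "reverse_walk m (reverse_walk m \<phi>) = \<phi>" by (rule reverse_walk_reverse_walk[OF \<phi>])
  show "closed_walk_weight (\<lambda>_. layer_edge m F) m (reverse_walk m \<phi>) =
      closed_walk_weight (\<lambda>_. layer_edge m F) m \<phi>"
    using \<phi> by (rule closed_walk_weight_reverse_walk) (use layer_edge_sym assms in auto)
next
  fix \<phi> assume "\<phi> \<in> fwd_homs m"
  then have \<phi>: "\<phi> \<in> {0..<m} \<rightarrow>\<^sub>E {0..<m*m}" and "\<forall>i<m. layer_fwd m \<phi> i"
    by (auto simp: fwd_homs_def)
  then show "reverse_walk m \<phi> \<in> bwd_homs m"
    using reverse_walk_PiE[OF \<phi>] all_less_diff_Suc[where P="layer_fwd m \<phi>" and m=m]
    by (auto simp: bwd_homs_def layer_bwd_reverse_walk)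
  show "reverse_walk m (reverse_walk m \<phi>) = \<phi>" by (rule reverse_walk_reverse_walk[OF \<phi>])
qed

lemma fwd_homs_bwd_homs_disjoint:
  assumes "3 \<le> m"
  shows "fwd_homs m \<inter> bwd_homs m = {}"
proof (rule ccontr)
  assume "fwd_homs m \<inter> bwd_homs m \<noteq> {}"
  then obtain \<phi> where "\<phi> \<in> fwd_homs m" "\<phi> \<in> bwd_homs m" by blast
  moreover have "0 < m" using assms by simp
  ultimately have "layer_fwd m \<phi> 0" "layer_bwd m \<phi> 0" "\<phi> 0 < m * m"
    by (auto simp: fwd_homs_def bwd_homs_def)
  then have "\<phi> 0 div m < m" "\<phi> (1 mod m) div m = Suc (\<phi> 0 div m) mod m"
    "\<phi> 0 div m = Suc (\<phi> (1 mod m) div m) mod m"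
    by (simp_all add: less_mult_imp_div_less layer_fwd_def layer_bwd_def)
  then show False by (rule Suc_mod_not_mutual[OF _ assms])
qed

lemma sum_layer_edge_homs:
  assumes "odd m" "3 \<le> m"
  shows "(\<Sum>\<phi>\<in>{0..<m} \<rightarrow>\<^sub>E {0..<m*m}. closed_walk_weight (\<lambda>_. layer_edge m F) m \<phi>) =
     of_nat (2 * m) * (\<Sum>u\<in>{0..<m} \<rightarrow>\<^sub>E {0..<m}. closed_walk_weight F m u)"
proof -
  let ?A = "{0..<m} \<rightarrow>\<^sub>E {0..<m*m}"
  let ?W = "closed_walk_weight (\<lambda>_. layer_edge m F) m"
  have fin: "finite ?A" by (simp add: finite_PiE)
  have sub: "fwd_homs m \<union> bwd_homs m \<subseteq> ?A" by (auto simp: fwd_homs_def bwd_homs_def)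
  have "?W \<phi> = 0" if "\<phi> \<in> ?A - (fwd_homs m \<union> bwd_homs m)" for \<phi>
  proof -
    have "\<not> ((\<forall>i<m. layer_fwd m \<phi> i) \<or> (\<forall>i<m. layer_bwd m \<phi> i))"
      using that by (auto simp: fwd_homs_def bwd_homs_def)
    then obtain i where "i < m" "\<not> layer_fwd m \<phi> i" "\<not> layer_bwd m \<phi> i"
      using odd_cycle_layer_steps[OF assms(1)] by blast
    then show ?thesis
      by (intro closed_walk_weight_eq_0[of i]) (simp_all add: layer_edge_def layer_fwd_def layer_bwd_def)
  qed
  then have "(\<Sum>\<phi>\<in>?A. ?W \<phi>) = (\<Sum>\<phi>\<in>fwd_homs m \<union> bwd_homs m. ?W \<phi>)"
    by (intro sum.mono_neutral_right[OF fin sub]) blast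
  also have "\<dots> = (\<Sum>\<phi>\<in>fwd_homs m. ?W \<phi>) + (\<Sum>\<phi>\<in>bwd_homs m. ?W \<phi>)"
    using fin sub fwd_homs_bwd_homs_disjoint[OF assms(2)]
    by (intro sum.union_disjoint) (auto intro: finite_subset)
  finally show ?thesis
    using sum_bwd_homs[OF assms(2), of F] sum_fwd_homs[of m F] assms by (simp add: algebra_simps)
qed

section \<open>Skew circuits as closed walks\<close>

definition is_const_or_var :: "'k::field mpoly \<Rightarrow> bool" where
  "is_const_or_var p \<longleftrightarrow> (\<exists>c. p = pConst c) \<or> (\<exists>w. p = pVar w)"

lemma is_const_or_var_0 [simp]: "is_const_or_var 0"
  unfolding is_const_or_var_def by (metis pConst_0)

lemma is_const_or_var_1 [simp]: "is_const_or_var 1"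
  unfolding is_const_or_var_def by (metis pConst_1)

lemma is_const_or_var_pVar [simp]: "is_const_or_var (pVar x)"
  unfolding is_const_or_var_def by auto

lemma is_const_or_var_pConst [simp]: "is_const_or_var (pConst c)"
  unfolding is_const_or_var_def by auto

text \<open>The graph of a circuit \<open>C\<close> has the gates and a source \<open>length C\<close> with a loop of weight
  \<open>1\<close>. An input gate is entered from the source with its label as weight, an addition gate from
  both arguments with weight \<open>1\<close>, and a multiplication gate from its argument that is not an
  input gate (skewness), with the value of the other argument as weight.\<close>

definition circuit_step :: "'k::field gate list \<Rightarrow> nat \<Rightarrow> nat \<Rightarrow> 'k mpoly" where
  "circuit_step C w v = (if v = length C then (if w = length C then 1 else 0)
     else if v < length C then (case C ! v of
         GVar x \<Rightarrow> if w = length C then pVar x else 0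
       | GConst c \<Rightarrow> if w = length C then pConst c else 0
       | GAdd j l \<Rightarrow> (if w = j then 1 else 0) + (if w = l then 1 else 0)
       | GMul j l \<Rightarrow> if is_input_gate (C ! j) then (if w = l then circuit_vals C ! j else 0)
                    else (if w = j then circuit_vals C ! l else 0))
     else 0)"

definition circuit_cycle_step :: "'k::field gate list \<Rightarrow> nat \<Rightarrow> 'k \<Rightarrow> nat \<Rightarrow> nat \<Rightarrow> nat \<Rightarrow> 'k mpoly" where
  "circuit_cycle_step C m c i w v =
    (if i = m - 1 then (if w = length C - 1 \<and> v = length C then pConst c else 0)
     else circuit_step C w v)"

lemma is_const_or_var_circuit_vals:
  fixes C :: "'k::field gate list"
  assumes "circuit_wf C" "j < length C" "is_input_gate (C ! j)"
  shows "is_const_or_var (circuit_vals C ! j)"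
  using circuit_vals_gate_sem[OF assms(1,2)] assms(3)
  by (cases "C ! j") (auto simp: gate_sem_def is_input_gate_def)

lemma is_const_or_var_circuit_step:
  fixes C :: "'k::field gate list"
  assumes wf: "circuit_wf C" and sk: "circuit_skew C"
  shows "is_const_or_var (circuit_step C w v)"
proof (cases "v < length C")
  case True
  have two: "is_const_or_var (2::'k mpoly)"
    using is_const_or_var_pConst[of "2::'k"] by (simp add: pConst_def)
  show ?thesis
  proof (cases "C ! v")
    case (GAdd j l)
    then show ?thesis using True two by (auto simp: circuit_step_def)
  next
    case (GMul j l)
    then have "j < length C" "l < length C" "is_input_gate (C ! j) \<or> is_input_gate (C ! l)"
      using True wf sk by (force simp: circuit_wf_def circuit_skew_def)+
    then show ?thesis using GMul True is_const_or_var_circuit_vals[OF wf]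
      by (auto simp: circuit_step_def)
  qed (auto simp: circuit_step_def)
qed (auto simp: circuit_step_def)

lemma is_const_or_var_circuit_cycle_step:
  "circuit_wf C \<Longrightarrow> circuit_skew C \<Longrightarrow> is_const_or_var (circuit_cycle_step C m c i w v)"
  using is_const_or_var_circuit_step by (auto simp: circuit_cycle_step_def)

lemma sum_circuit_step_source:
  assumes "length C < m"
  shows "(\<Sum>w\<in>{0..<m}. P w * circuit_step C w (length C)) = P (length C)"
  using sum_mult_delta[of "{0..<m}" "length C" P 1] assms by (simp add: circuit_step_def)

lemma sum_circuit_step_gate:
  fixes C :: "'k::field gate list"
  assumes wf: "circuit_wf C" and v: "v < length C" and Lm: "length C < m"
    and source: "P (length C) = 1" and below: "\<And>w. w < v \<Longrightarrow> P w = circuit_vals C ! w"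
  shows "(\<Sum>w\<in>{0..<m}. P w * circuit_step C w v) = circuit_vals C ! v"
proof -
  let ?val = "\<lambda>i. circuit_vals C ! i"
  have args: "gate_args_below v (C ! v)" using wf v by (simp add: circuit_wf_iff)
  have sem: "?val v = gate_sem ?val (C ! v)" by (rule circuit_vals_gate_sem[OF wf v])
  have L: "length C \<in> {0..<m}" using Lm by simp
  have arg: "w \<in> {0..<m}" if "w < v" for w using that v Lm by simp
  show ?thesis
  proof (cases "C ! v")
    case (GVar x)
    then show ?thesis using v sem source sum_mult_delta[OF _ L, of P]
      by (simp add: circuit_step_def gate_sem_def)
  next
    case (GConst c)
    then show ?thesis using v sem source sum_mult_delta[OF _ L, of P]
      by (simp add: circuit_step_def gate_sem_def)
  next
    case (GAdd j l)
    then have jl: "j < v" "l < v" using args by (auto simp: gate_args_below_def)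
    then show ?thesis
      using v GAdd sem below sum_mult_delta[OF _ arg[OF jl(1)], of P 1] sum_mult_delta[OF _ arg[OF jl(2)], of P 1]
      by (simp add: circuit_step_def gate_sem_def distrib_left sum.distrib)
  next
    case (GMul j l)
    then have jl: "j < v" "l < v" using args by (auto simp: gate_args_below_def)
    then show ?thesis
      using v GMul sem below sum_mult_delta[OF _ arg[OF jl(1)], of P] sum_mult_delta[OF _ arg[OF jl(2)], of P]
      by (cases "is_input_gate (C ! j)") (simp_all add: circuit_step_def gate_sem_def mult.commute)
  qed
qed

lemma walk_sum_circuit_cycle_step:
  fixes C :: "'k::field gate list"
  assumes wf: "circuit_wf C" and Lm: "length C < m"
  shows "r \<le> m - 1 \<Longrightarrow> walk_sum (circuit_cycle_step C m c) {0..<m} (length C) r (length C) = 1 \<and>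
      (\<forall>v<length C. v < r \<longrightarrow> walk_sum (circuit_cycle_step C m c) {0..<m} (length C) r v = circuit_vals C ! v)"
proof (induction r)
  case 0
  then show ?case using Lm by (simp add: walk_sum_0)
next
  case (Suc r)
  let ?P = "walk_sum (circuit_cycle_step C m c) {0..<m} (length C) r"
  have step: "walk_sum (circuit_cycle_step C m c) {0..<m} (length C) (Suc r) v =
      (\<Sum>w\<in>{0..<m}. ?P w * circuit_step C w v)" if "v < m" for v
    using walk_sum_Suc[of "{0..<m}" v "circuit_cycle_step C m c" "length C" r] that Suc.prems
    by (simp add: circuit_cycle_step_def)
  have "?P (length C) = 1" "\<And>w. w < length C \<Longrightarrow> w < r \<Longrightarrow> ?P w = circuit_vals C ! w"
    using Suc by auto
  then show ?case
    using step sum_circuit_step_source[OF Lm] sum_circuit_step_gate[OF wf _ Lm] Lm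
    by (auto simp del: atLeastLessThan_iff)
qed

lemma sum_closed_walk_weight_circuit_cycle_step:
  fixes C :: "'k::field gate list"
  assumes wf: "circuit_wf C" and Lm: "length C < m"
  shows "(\<Sum>u\<in>{0..<m} \<rightarrow>\<^sub>E {0..<m}. closed_walk_weight (circuit_cycle_step C m c) m u) =
    circuit_output C * pConst c"
proof -
  let ?L = "length C"
  let ?F = "circuit_cycle_step C m c"
  obtain n where mn: "m = Suc n" using Lm by (cases m) auto
  have "(\<Sum>u\<in>{0..<m} \<rightarrow>\<^sub>E {0..<m}. closed_walk_weight ?F m u) =
      (\<Sum>s\<in>{0..<m}. \<Sum>v\<in>{0..<m}. walk_sum ?F {0..<m} s n v * ?F n v s)"
    using sum_closed_walk_weight[of "{0..<m}" ?F n] mn by simp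
  also have "\<dots> = (\<Sum>s\<in>{0..<m}. \<Sum>v\<in>{0..<m}.
      (if ?L = s \<and> ?L - 1 = v then 1 else 0) * (walk_sum ?F {0..<m} s n v * pConst c))"
    by (intro sum.cong refl) (auto simp: circuit_cycle_step_def mn)
  also have "\<dots> = walk_sum ?F {0..<m} ?L n (?L - 1) * pConst c"
    by (rule sum_sum_delta) (use Lm in auto)
  also have "walk_sum ?F {0..<m} ?L n (?L - 1) = circuit_output C"
    using walk_sum_circuit_cycle_step[OF wf Lm, of n c] wf Lm mn
    by (simp add: circuit_output_eq_nth circuit_wf_def)
  finally show ?thesis .
qed

section \<open>Hardness\<close>

definition loopless_edge_var :: "nat \<Rightarrow> nat \<Rightarrow> 'k::field mpoly" where
  "loopless_edge_var a b = (if a = b then 0 else edge_var a b)"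

lemma cycle_hom_poly_eq_sum_closed_walks:
  assumes "m = 2 * k + 1"
  shows "(cycle_hom_poly k :: 'k::field mpoly) =
    (\<Sum>\<phi>\<in>{0..<m} \<rightarrow>\<^sub>E {0..<m*m}. closed_walk_weight (\<lambda>_. loopless_edge_var) m \<phi>)"
proof -
  let ?A = "{0..<m} \<rightarrow>\<^sub>E {0..<m*m}"
  let ?H = "{\<phi>\<in>?A. \<forall>i<m. \<phi> i \<noteq> \<phi> ((i + 1) mod m)}"
  have "(cycle_hom_poly k :: 'k mpoly) = (\<Sum>\<phi>\<in>?H. closed_walk_weight (\<lambda>_. edge_var) m \<phi>)"
    unfolding cycle_hom_poly_def Let_def assms closed_walk_weight_def by (simp add: power2_eq_square)
  also have "\<dots> = (\<Sum>\<phi>\<in>?H. closed_walk_weight (\<lambda>_. loopless_edge_var) m \<phi>)"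
    unfolding closed_walk_weight_def
    by (intro sum.cong refl prod.cong) (auto simp: loopless_edge_var_def)
  also have "\<dots> = (\<Sum>\<phi>\<in>?A. closed_walk_weight (\<lambda>_. loopless_edge_var) m \<phi>)"
  proof (rule sum.mono_neutral_left)
    have "closed_walk_weight (\<lambda>_. loopless_edge_var) m \<phi> = (0::'k mpoly)" if \<phi>: "\<phi> \<in> ?A - ?H" for \<phi>
    proof -
      obtain i where "i < m" "\<phi> i = \<phi> ((i + 1) mod m)" using \<phi> by blast
      then show ?thesis
        by (intro closed_walk_weight_eq_0[of i]) (simp_all add: loopless_edge_var_def)
    qed
    then show "\<forall>\<phi>\<in>?A - ?H. closed_walk_weight (\<lambda>_. loopless_edge_var) m \<phi> = (0::'k mpoly)"
      by blast
  qed (auto simp: finite_PiE)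
  finally show ?thesis .
qed

lemma psubst_cycle_hom_poly:
  assumes m: "m = 2 * k + 1"
    and edge: "\<And>a b. a < m * m \<Longrightarrow> b < m * m \<Longrightarrow> psubst \<sigma> (edge_var a b) = G a b"
    and loop: "\<And>a. a < m * m \<Longrightarrow> G a a = 0"
  shows "psubst \<sigma> (cycle_hom_poly k) =
    (\<Sum>\<phi>\<in>{0..<m} \<rightarrow>\<^sub>E {0..<m*m}. closed_walk_weight (\<lambda>_. G) m \<phi>)"
  unfolding cycle_hom_poly_eq_sum_closed_walks[OF m] psubst_sum closed_walk_weight_def psubst_prod
proof (intro sum.cong refl prod.cong)
  fix \<phi> i assume "\<phi> \<in> {0..<m} \<rightarrow>\<^sub>E {0..<m*m}" "i \<in> {..<m}"
  then have "\<phi> i < m * m" "\<phi> ((i + 1) mod m) < m * m" using m by auto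
  then show "psubst \<sigma> (loopless_edge_var (\<phi> i) (\<phi> ((i + 1) mod m))) = G (\<phi> i) (\<phi> ((i + 1) mod m))"
    using edge loop by (auto simp: loopless_edge_var_def)
qed

lemma is_projection_circuit_output:
  fixes C :: "'k::field gate list"
  assumes wf: "circuit_wf C" and sk: "circuit_skew C" and m: "m = 2 * k + 1"
    and Lm: "length C < m" and m3: "3 \<le> m" and char: "of_nat (2 * m) \<noteq> (0::'k)"
  shows "is_projection (circuit_output C) (cycle_hom_poly k)"
proof -
  define c where "c = inverse (of_nat (2 * m) :: 'k)"
  define F where "F = circuit_cycle_step C m c"
  define \<sigma> where "\<sigma> v = (case prod_decode v of (a, b) \<Rightarrow> layer_edge m F a b)" for v
  have \<sigma>_proj: "is_const_or_var (\<sigma> v)" for v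
  proof -
    obtain a b where "prod_decode v = (a, b)" by (cases "prod_decode v")
    then show ?thesis
      using is_const_or_var_circuit_cycle_step[OF wf sk]
      by (simp add: \<sigma>_def layer_edge_def F_def)
  qed
  have edge: "psubst \<sigma> (edge_var a b) = layer_edge m F a b" if "a < m * m" "b < m * m" for a b
  proof -
    have "psubst \<sigma> (edge_var a b) = layer_edge m F (min a b) (max a b)"
      by (simp add: edge_var_def \<sigma>_def prod_encode_inverse)
    then show ?thesis
      using layer_edge_sym[OF that(1) m3, of F] by (cases "a \<le> b") (simp_all add: min_def max_def)
  qed
  have "psubst \<sigma> (cycle_hom_poly k) =
      (\<Sum>\<phi>\<in>{0..<m} \<rightarrow>\<^sub>E {0..<m*m}. closed_walk_weight (\<lambda>_. layer_edge m F) m \<phi>)"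
    using m3 by (intro psubst_cycle_hom_poly[OF m edge]) (auto intro: layer_edge_diag)
  also have "\<dots> = of_nat (2 * m) * (\<Sum>u\<in>{0..<m} \<rightarrow>\<^sub>E {0..<m}. closed_walk_weight F m u)"
    using m m3 by (intro sum_layer_edge_homs) simp_all
  also have "\<dots> = (of_nat (2 * m) * pConst c) * circuit_output C"
    unfolding F_def sum_closed_walk_weight_circuit_cycle_step[OF wf Lm] by (simp only: mult_ac)
  also have "of_nat (2 * m) * pConst c = 1"
    using char by (simp add: c_def pConst_of_nat[symmetric] pConst_mult[symmetric])
  finally have "psubst \<sigma> (cycle_hom_poly k) = circuit_output C" by simp
  then show ?thesis
    using \<sigma>_proj unfolding is_projection_def is_const_or_var_def by metis
qed

lemma of_nat_double_add_2_nonzero: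
  assumes "CHAR('k::field) \<noteq> 2" "of_nat (2 * a) = (0::'k)"
  shows "of_nat (2 * (a + 2)) \<noteq> (0::'k)"
proof
  assume "of_nat (2 * (a + 2)) = (0::'k)"
  moreover have "2 * (a + 2) = 2 * a + 2 * 2" by simp
  ultimately have "(of_nat 2 :: 'k) * of_nat 2 = 0"
    using assms(2) by (metis add.left_neutral of_nat_add of_nat_mult)
  then have "(of_nat 2 :: 'k) = 0" by (simp only: mult_eq_0_iff) simp
  then have "CHAR('k) dvd 2" by (simp only: of_nat_eq_0_iff_char_dvd)
  then have "CHAR('k) \<le> 2" "CHAR('k) \<noteq> 0" by (auto dest: dvd_imp_le intro: Nat.gr0I)
  then show False using assms(1) CHAR_not_1[where 'a='k] by linarith
qed

lemma poly_bounded_const: "poly_bounded (\<lambda>_. c)"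
proof -
  have "c \<le> (n + 2) ^ c" for n
  proof -
    have "c < 2 ^ c" by (rule less_exp)
    also have "(2::nat) ^ c \<le> (n + 2) ^ c" by (rule power_mono) auto
    finally show ?thesis by simp
  qed
  then show ?thesis unfolding poly_bounded_def by blast
qed

lemma poly_bounded_id: "poly_bounded (\<lambda>n. n)"
  unfolding poly_bounded_def by (rule exI[of _ 1]) simp

lemma poly_bounded_add:
  assumes "poly_bounded f" "poly_bounded g"
  shows "poly_bounded (\<lambda>n. f n + g n)"
proof -
  obtain a b where a: "\<And>n. f n \<le> (n + 2) ^ a" and b: "\<And>n. g n \<le> (n + 2) ^ b"
    using assms unfolding poly_bounded_def by blast
  have "f n + g n \<le> (n + 2) ^ (max a b + 1)" for n
  proof -
    have "(n + 2) ^ a \<le> (n + 2) ^ max a b" "(n + 2) ^ b \<le> (n + 2) ^ max a b"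
      by (rule power_increasing; simp)+
    then have "f n + g n \<le> 2 * (n + 2) ^ max a b" using a[of n] b[of n] by linarith
    also have "\<dots> \<le> (n + 2) * (n + 2) ^ max a b" by (rule mult_le_mono1) simp
    finally show ?thesis by simp
  qed
  then show ?thesis unfolding poly_bounded_def by blast
qed

lemma poly_bounded_mult:
  assumes "poly_bounded f" "poly_bounded g"
  shows "poly_bounded (\<lambda>n. f n * g n)"
proof -
  obtain a b where a: "\<And>n. f n \<le> (n + 2) ^ a" and b: "\<And>n. g n \<le> (n + 2) ^ b"
    using assms unfolding poly_bounded_def by blast
  have "f n * g n \<le> (n + 2) ^ (a + b)" for n
    using mult_le_mono[OF a[of n] b[of n]] by (simp add: power_add)
  then show ?thesis unfolding poly_bounded_def by blast
qed

lemma poly_bounded_mono: "poly_bounded f \<Longrightarrow> (\<And>n. g n \<le> f n) \<Longrightarrow> poly_bounded g"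
  unfolding poly_bounded_def by (meson order_trans)

lemmas poly_bounded_intros = poly_bounded_add poly_bounded_mult poly_bounded_const poly_bounded_id

text \<open>The cycle length \<open>2k + 1\<close> has to exceed the circuit size, and \<open>2(2k + 1)\<close> has to be
  invertible; of two consecutive odd numbers, one of them meets the second requirement.\<close>

lemma p_projection_cycle_hom_poly:
  assumes char: "CHAR('k::field) \<noteq> 2" and g: "g \<in> VBP"
  shows "p_projection g (cycle_hom_poly :: nat \<Rightarrow> 'k mpoly)"
proof -
  obtain s where s: "poly_bounded s" and "\<forall>n. \<exists>C. circuit_wf C \<and> circuit_skew C \<and>
      length C \<le> s n \<and> circuit_output C = g n"
    using g unfolding VBP_def by blast
  then obtain C where C: "\<And>n. circuit_wf (C n) \<and> circuit_skew (C n) \<and> length (C n) \<le> s n \<and>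
      circuit_output (C n) = g n"
    by metis
  define k where "k n = (if of_nat (2 * (2 * (length (C n) + 2) + 1)) \<noteq> (0::'k)
    then length (C n) + 2 else length (C n) + 3)" for n
  have "of_nat (2 * (2 * k n + 1)) \<noteq> (0::'k)" for n
  proof (cases "of_nat (2 * (2 * (length (C n) + 2) + 1)) \<noteq> (0::'k)")
    case True
    then show ?thesis by (simp add: k_def)
  next
    case False
    then have "of_nat (2 * (2 * (length (C n) + 2) + 1 + 2)) \<noteq> (0::'k)"
      using of_nat_double_add_2_nonzero[OF char] by blast
    moreover have "2 * (length (C n) + 2) + 1 + 2 = 2 * k n + 1" using False by (simp add: k_def)
    ultimately show ?thesis by metis
  qed
  then have "is_projection (circuit_output (C n)) (cycle_hom_poly (k n))" for n
    using C by (intro is_projection_circuit_output[OF _ _ refl]) (auto simp: k_def)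
  moreover have "poly_bounded k"
  proof (rule poly_bounded_mono[OF poly_bounded_add[OF s poly_bounded_const[of 3]]])
    fix n
    have "length (C n) \<le> s n" using C by blast
    then show "k n \<le> s n + 3" by (simp add: k_def)
  qed
  ultimately show ?thesis unfolding p_projection_def using C by metis
qed

section \<open>Degrees and variables\<close>

definition monom_degree :: "(nat \<Rightarrow>\<^sub>0 nat) \<Rightarrow> nat" where
  "monom_degree m = sum (Poly_Mapping.lookup m) (Poly_Mapping.keys m)"

lemma monom_degree_superset:
  "finite S \<Longrightarrow> Poly_Mapping.keys m \<subseteq> S \<Longrightarrow> monom_degree m = sum (Poly_Mapping.lookup m) S"
  unfolding monom_degree_def by (rule sum.mono_neutral_left) (auto simp: in_keys_iff)

lemma monom_degree_add: "monom_degree (a + b) = monom_degree a + monom_degree b"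
proof -
  let ?S = "Poly_Mapping.keys a \<union> Poly_Mapping.keys b"
  have "monom_degree (a + b) = sum (Poly_Mapping.lookup (a + b)) ?S"
    by (rule monom_degree_superset) (simp_all add: keys_add)
  also have "\<dots> = sum (Poly_Mapping.lookup a) ?S + sum (Poly_Mapping.lookup b) ?S"
    by (simp add: lookup_add sum.distrib)
  also have "\<dots> = monom_degree a + monom_degree b" by (simp add: monom_degree_superset[symmetric])
  finally show ?thesis .
qed

lemma pdeg_le_iff: "pdeg p \<le> d \<longleftrightarrow> (\<forall>m\<in>Poly_Mapping.keys p. monom_degree m \<le> d)"
  unfolding pdeg_def monom_degree_def[symmetric] by (simp add: Max_le_iff)

lemma monom_degree_le_pdeg: "m \<in> Poly_Mapping.keys p \<Longrightarrow> monom_degree m \<le> pdeg p"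
  using pdeg_le_iff[of p "pdeg p"] by simp

lemma pdeg_add: "pdeg (p + q) \<le> max (pdeg p) (pdeg q)"
  unfolding pdeg_le_iff
proof
  fix m assume m: "m \<in> Poly_Mapping.keys (p + q)"
  have "m \<in> Poly_Mapping.keys p \<union> Poly_Mapping.keys q" using keys_add m by (rule subsetD)
  then show "monom_degree m \<le> max (pdeg p) (pdeg q)"
    using monom_degree_le_pdeg[of m p] monom_degree_le_pdeg[of m q] by (auto simp: le_max_iff_disj)
qed

lemma pdeg_mult: "pdeg (p * q) \<le> pdeg p + pdeg q"
  unfolding pdeg_le_iff
proof
  fix m assume "m \<in> Poly_Mapping.keys (p * q)"
  then have "m \<in> {a + b | a b. a \<in> Poly_Mapping.keys p \<and> b \<in> Poly_Mapping.keys q}"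
    by (rule subsetD[OF keys_mult])
  then obtain a b where "m = a + b" "a \<in> Poly_Mapping.keys p" "b \<in> Poly_Mapping.keys q"
    by blast
  then show "monom_degree m \<le> pdeg p + pdeg q"
    using monom_degree_le_pdeg[of a p] monom_degree_le_pdeg[of b q] by (simp add: monom_degree_add)
qed

lemma pdeg_sum: "(\<And>a. a \<in> A \<Longrightarrow> pdeg (f a) \<le> d) \<Longrightarrow> pdeg (sum f A) \<le> d"
proof (induction A rule: infinite_finite_induct)
  case (insert x F)
  have a: "pdeg (f x) \<le> d" using insert.prems by simp
  have b: "pdeg (sum f F) \<le> d" using insert by simp
  show ?case
    using insert.hyps order_trans[OF pdeg_add[of "f x" "sum f F"] max.boundedI[OF a b]] by simp
qed (simp_all add: pdeg_def)

lemma pdeg_1: "pdeg (1::'k::field mpoly) = 0"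
  unfolding pdeg_def by simp

lemma pdeg_prod: "pdeg (prod f A) \<le> (\<Sum>a\<in>A. pdeg (f a))"
proof (induction A rule: infinite_finite_induct)
  case (insert x F)
  then show ?case using pdeg_mult[of "f x" "prod f F"] by simp
qed (simp_all add: pdeg_1)

lemma pdeg_pVar: "pdeg (pVar x :: 'k::field mpoly) = 1"
  unfolding pdeg_def pVar_def by simp

lemma pvars_add: "pvars (p + q) \<subseteq> pvars p \<union> pvars q"
proof
  fix x assume "x \<in> pvars (p + q)"
  then obtain m where m: "m \<in> Poly_Mapping.keys (p + q)" "x \<in> Poly_Mapping.keys m" unfolding pvars_def by blast
  have "m \<in> Poly_Mapping.keys p \<union> Poly_Mapping.keys q" using keys_add m(1) by (rule subsetD)
  then show "x \<in> pvars p \<union> pvars q" using m(2) unfolding pvars_def by blast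
qed

lemma pvars_mult: "pvars (p * q) \<subseteq> pvars p \<union> pvars q"
proof
  fix x assume "x \<in> pvars (p * q)"
  then obtain m where m: "m \<in> Poly_Mapping.keys (p * q)" "x \<in> Poly_Mapping.keys m" unfolding pvars_def by blast
  from m(1) have "m \<in> {a + b | a b. a \<in> Poly_Mapping.keys p \<and> b \<in> Poly_Mapping.keys q}"
    by (rule subsetD[OF keys_mult])
  then obtain a b where "m = a + b" "a \<in> Poly_Mapping.keys p" "b \<in> Poly_Mapping.keys q"
    by blast
  then have "x \<in> Poly_Mapping.keys a \<union> Poly_Mapping.keys b" using m(2) keys_add[of a b] by blast
  then show "x \<in> pvars p \<union> pvars q" using \<open>a \<in> _\<close> \<open>b \<in> _\<close> unfolding pvars_def by blast
qed

lemma pvars_sum: "(\<And>a. a \<in> A \<Longrightarrow> pvars (f a) \<subseteq> X) \<Longrightarrow> pvars (sum f A) \<subseteq> X"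
proof (induction A rule: infinite_finite_induct)
  case (insert x F)
  then show ?case using pvars_add[of "f x" "sum f F"] by auto
qed (simp_all add: pvars_def)

lemma pvars_prod: "(\<And>a. a \<in> A \<Longrightarrow> pvars (f a) \<subseteq> X) \<Longrightarrow> pvars (prod f A) \<subseteq> X"
proof (induction A rule: infinite_finite_induct)

  case (insert x F)
  then show ?case using pvars_mult[of "f x" "prod f F"] by auto
qed (simp_all add: pvars_def)

lemma pvars_pVar: "pvars (pVar x :: 'k::field mpoly) = {x}"
  unfolding pvars_def pVar_def by simp

lemma pvars_cycle_hom_poly:
  "pvars (cycle_hom_poly k :: 'k::field mpoly) \<subseteq>
     prod_encode ` ({0..<(2*k+1)*(2*k+1)} \<times> {0..<(2*k+1)*(2*k+1)})"
  unfolding cycle_hom_poly_def Let_def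
proof (intro pvars_sum pvars_prod)
  fix \<phi> i
  assume "\<phi> \<in> {\<phi> \<in> {0..<2 * k + 1} \<rightarrow>\<^sub>E {0..<(2 * k + 1)\<^sup>2}. \<forall>i<2 * k + 1. \<phi> i \<noteq> \<phi> ((i + 1) mod (2 * k + 1))}"
    and "i \<in> {..<2 * k + 1}"
  then have "\<phi> i < (2*k+1)*(2*k+1)" "\<phi> ((i + 1) mod (2 * k + 1)) < (2*k+1)*(2*k+1)"
    by (auto simp: power2_eq_square)
  then show "pvars (edge_var (\<phi> i) (\<phi> ((i + 1) mod (2 * k + 1))) :: 'k mpoly) \<subseteq>
      prod_encode ` ({0..<(2*k+1)*(2*k+1)} \<times> {0..<(2*k+1)*(2*k+1)})"
    by (auto simp: edge_var_def pvars_pVar min_def max_def)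
qed

lemma pdeg_cycle_hom_poly: "pdeg (cycle_hom_poly k :: 'k::field mpoly) \<le> 2 * k + 1"
  unfolding cycle_hom_poly_def Let_def
proof (intro pdeg_sum)
  fix \<phi>
  let ?e = "\<lambda>i. edge_var (\<phi> i) (\<phi> ((i + 1) mod (2 * k + 1))) :: 'k mpoly"
  have "pdeg (\<Prod>i<2 * k + 1. ?e i) \<le> (\<Sum>i<2 * k + 1. pdeg (?e i))"
    by (rule pdeg_prod)
  also have "\<dots> = 2 * k + 1" by (simp add: edge_var_def pdeg_pVar)
  finally show "pdeg (\<Prod>i<2 * k + 1. ?e i) \<le> 2 * k + 1" .
qed

section \<open>Membership\<close>

definition complete_walk_sum :: "nat \<Rightarrow> nat \<Rightarrow> nat \<Rightarrow> nat \<Rightarrow> 'k::field mpoly" where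
  "complete_walk_sum N s r v = walk_sum (\<lambda>_. loopless_edge_var) {0..<N} s r v"

lemma complete_walk_sum_0: "v < N \<Longrightarrow> complete_walk_sum N s 0 v = (if s = v then 1 else 0)"
  unfolding complete_walk_sum_def by (rule walk_sum_0) auto

lemma complete_walk_sum_Suc:
  "v < N \<Longrightarrow> complete_walk_sum N s (Suc r) v = (\<Sum>w<N. loopless_edge_var w v * complete_walk_sum N s r w)"
  unfolding complete_walk_sum_def by (subst walk_sum_Suc) (auto simp: atLeast0LessThan mult.commute)

lemma cycle_hom_poly_eq_trace:
  assumes "m = 2 * k + 1" "N = m * m"
  shows "cycle_hom_poly k = (\<Sum>s<N. complete_walk_sum N s m s :: 'k::field mpoly)"
proof -
  obtain n where m: "m = Suc n" using assms(1) by simp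
  have "(cycle_hom_poly k :: 'k mpoly) =
      (\<Sum>\<phi>\<in>{0..<Suc n} \<rightarrow>\<^sub>E {0..<N}. closed_walk_weight (\<lambda>_. loopless_edge_var) (Suc n) \<phi>)"
    using cycle_hom_poly_eq_sum_closed_walks[OF assms(1)] by (simp only: assms(2) m)
  also have "\<dots> = (\<Sum>s\<in>{0..<N}. \<Sum>v\<in>{0..<N}. complete_walk_sum N s n v * loopless_edge_var v s)"
    unfolding complete_walk_sum_def by (rule sum_closed_walk_weight) simp
  also have "\<dots> = (\<Sum>s<N. complete_walk_sum N s m s)"
    by (simp add: complete_walk_sum_Suc m atLeast0LessThan mult.commute)
  finally show ?thesis .
qed

definition valid_skew_gate :: "(nat \<Rightarrow> 'k::field gate) \<Rightarrow> (nat \<Rightarrow> 'k mpoly) \<Rightarrow> nat \<Rightarrow> bool" where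
  "valid_skew_gate G V i \<longleftrightarrow> gate_args_below i (G i) \<and> V i = gate_sem V (G i) \<and>
     (\<forall>a b. G i = GMul a b \<longrightarrow> a < i \<and> is_input_gate (G a))"

lemma circuit_of_valid_skew_gates:
  assumes n: "0 < n" and valid: "\<And>i. i < n \<Longrightarrow> valid_skew_gate G V i"
  shows "circuit_wf (map G [0..<n])" "circuit_skew (map G [0..<n])"
    "circuit_output (map G [0..<n]) = V (n - 1)"
proof -
  show wf: "circuit_wf (map G [0..<n])"
    using n valid by (simp add: circuit_wf_iff valid_skew_gate_def)
  show "circuit_skew (map G [0..<n])"
    unfolding circuit_skew_def
  proof (intro allI impI)
    fix i assume "i < length (map G [0..<n])"
    with valid[of i] show "case map G [0..<n] ! i of
        GMul j l \<Rightarrow> is_input_gate (map G [0..<n] ! j) \<or> is_input_gate (map G [0..<n] ! l) | _ \<Rightarrow> True"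
      by (cases "G i") (auto simp: valid_skew_gate_def)
  qed
  have "circuit_output (map G [0..<n]) = V (length (map G [0..<n]) - 1)"
  proof (rule circuit_output_eqI[OF wf])
    fix i assume "i < length (map G [0..<n])"
    then have "i < n" "map G [0..<n] ! i = G i" by simp_all
    moreover from valid[OF \<open>i < n\<close>] have "V i = gate_sem V (G i)"
      unfolding valid_skew_gate_def by blast
    ultimately show "V i = gate_sem V (map G [0..<n] ! i)" by (simp only:)
  qed
  then show "circuit_output (map G [0..<n]) = V (n - 1)" by simp
qed

text \<open>The circuit for \<open>\<Sum>\<^bsub>s<N\<^esub> complete_walk_sum N s m s\<close>: gates \<open>0\<close> and \<open>1\<close> are the
  constants, gate \<open>2 + w * N + v\<close> is the edge variable of \<open>(w, v)\<close>. The block of \<open>2 * N\<close> gates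
  for \<open>(s, r, v)\<close> alternately multiplies the edge variable of \<open>(w, v)\<close> into the walk sum
  \<open>(s, r, w)\<close> and adds up these products, so that its last gate computes the walk sum
  \<open>(s, r + 1, v)\<close>. The final \<open>N\<close> gates add up the closed walk sums.\<close>

definition edge_gate :: "nat \<Rightarrow> nat \<Rightarrow> 'k::field gate" where
  "edge_gate w v = (if w = v then GConst 0 else GVar (prod_encode (min w v, max w v)))"

definition block_start :: "nat \<Rightarrow> nat" where
  "block_start N = 2 + N * N"

definition sum_start :: "nat \<Rightarrow> nat \<Rightarrow> nat" where
  "sum_start N m = block_start N + N * m * N * (2 * N)"

definition walk_gate :: "nat \<Rightarrow> nat \<Rightarrow> nat \<Rightarrow> nat \<Rightarrow> nat \<Rightarrow> nat" where
  "walk_gate N m s r v = (if r = 0 then (if s = v then 1 else 0)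
     else block_start N + ((s * m + (r - 1)) * N + v) * (2 * N) + (2 * N - 1))"

definition trace_gate :: "nat \<Rightarrow> nat \<Rightarrow> nat \<Rightarrow> 'k::field gate" where
  "trace_gate N m i = (if i = 0 then GConst 0 else if i = 1 then GConst 1
     else if i < block_start N then edge_gate ((i - 2) div N) ((i - 2) mod N)
     else if i < sum_start N m then
       (let q = (i - block_start N) div (2 * N); t = (i - block_start N) mod (2 * N);
            v = q mod N; r = (q div N) mod m; s = (q div N) div m; w = t div 2 in
        if even t then GMul (2 + w * N + v) (walk_gate N m s r w)
        else GAdd (if w = 0 then 0 else i - 2) (i - 1))
     else GAdd (if i = sum_start N m then 0 else i - 1)
            (walk_gate N m (i - sum_start N m) m (i - sum_start N m)))"

definition trace_value :: "nat \<Rightarrow> nat \<Rightarrow> nat \<Rightarrow> 'k::field mpoly" where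
  "trace_value N m i = (if i = 0 then 0 else if i = 1 then 1
     else if i < block_start N then loopless_edge_var ((i - 2) div N) ((i - 2) mod N)
     else if i < sum_start N m then
       (let q = (i - block_start N) div (2 * N); t = (i - block_start N) mod (2 * N);
            v = q mod N; r = (q div N) mod m; s = (q div N) div m; w = t div 2 in
        if even t then loopless_edge_var w v * complete_walk_sum N s r w
        else (\<Sum>w'<Suc w. loopless_edge_var w' v * complete_walk_sum N s r w'))
     else (\<Sum>s'<Suc (i - sum_start N m). complete_walk_sum N s' m s'))"

lemma trace_value_0 [simp]: "trace_value N m 0 = 0"
  by (simp add: trace_value_def)

lemma is_input_gate_edge_gate: "is_input_gate (edge_gate w v)"
  by (simp add: edge_gate_def is_input_gate_def)

lemma valid_skew_gate_edge_gate:
  "G i = edge_gate w v \<Longrightarrow> V i = loopless_edge_var w v \<Longrightarrow> valid_skew_gate G V i"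
  by (auto simp: valid_skew_gate_def edge_gate_def gate_args_below_def gate_sem_def
      loopless_edge_var_def edge_var_def)

context
  fixes N m :: nat
  assumes N: "0 < N" and m: "0 < m"
begin

lemma input_index_less: "w < N \<Longrightarrow> v < N \<Longrightarrow> 2 + w * N + v < block_start N"
  using mult_add_less_mult[of w N v N] by (simp add: block_start_def)

lemma trace_value_input:
  assumes "w < N" "v < N"
  shows "trace_value N m (2 + w * N + v) = loopless_edge_var w v"
proof -
  have "(w * N + v) div N = w" "(w * N + v) mod N = v" using assms by simp_all
  then show ?thesis using input_index_less[OF assms] by (simp add: trace_value_def)
qed

lemma block_index_decode:
  assumes "s < N" "r < m" "v < N" "t < 2 * N"
  defines "i \<equiv> block_start N + ((s * m + r) * N + v) * (2 * N) + t"
  shows "block_start N \<le> i" "i < sum_start N m"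
    "(i - block_start N) mod (2 * N) = t"
    "((i - block_start N) div (2 * N)) mod N = v" "(((i - block_start N) div (2 * N)) div N) mod m = r"
    "(((i - block_start N) div (2 * N)) div N) div m = s"
proof -
  let ?q = "(s * m + r) * N + v"
  have iq: "i - block_start N = ?q * (2 * N) + t" unfolding i_def by simp
  show "block_start N \<le> i" unfolding i_def by simp
  have "?q < N * m * N"
    using mult_add_less_mult[OF mult_add_less_mult[OF assms(1,2)] assms(3)] by simp
  then have "(?q + 1) * (2 * N) \<le> N * m * N * (2 * N)" by (intro mult_le_mono1) simp
  moreover have "?q * (2 * N) + t < (?q + 1) * (2 * N)" using assms(4) by simp
  ultimately show "i < sum_start N m" unfolding i_def sum_start_def by linarith
  have "(i - block_start N) div (2 * N) = ?q" "(i - block_start N) mod (2 * N) = t"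
    unfolding iq using assms(4) by simp_all
  then show "(i - block_start N) mod (2 * N) = t" "((i - block_start N) div (2 * N)) mod N = v"
    "(((i - block_start N) div (2 * N)) div N) mod m = r"
    "(((i - block_start N) div (2 * N)) div N) div m = s"
    using assms by simp_all
qed

lemma block_indexE:
  assumes "block_start N \<le> i" "i < sum_start N m"
  obtains s r v t where "s < N" "r < m" "v < N" "t < 2 * N"
    "i = block_start N + ((s * m + r) * N + v) * (2 * N) + t"
proof -
  define q where "q = (i - block_start N) div (2 * N)"
  define t where "t = (i - block_start N) mod (2 * N)"
  have "i - block_start N = q * (2 * N) + t" unfolding q_def t_def by (rule div_mult_mod_eq[symmetric])
  then have i: "i = block_start N + q * (2 * N) + t" using assms(1) by linarith
  have t: "t < 2 * N" using N unfolding t_def by simp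
  have "q * (2 * N) < N * m * N * (2 * N)" using assms(2) i unfolding sum_start_def by linarith
  then have "q div N < N * m" by (simp add: less_mult_imp_div_less)
  then have "q div N div m < N" by (simp add: less_mult_imp_div_less)
  moreover have "q = (q div N div m * m + q div N mod m) * N + q mod N" by simp
  ultimately show ?thesis using that[OF _ _ _ t] i m N by (metis mod_less_divisor)
qed

lemma block_gate_value:
  assumes "s < N" "r < m" "v < N" "t < 2 * N"
  defines "i \<equiv> block_start N + ((s * m + r) * N + v) * (2 * N) + t"
  shows "trace_gate N m i = (if even t then GMul (2 + (t div 2) * N + v) (walk_gate N m s r (t div 2))
            else GAdd (if t div 2 = 0 then 0 else i - 2) (i - 1))"
    "trace_value N m i = (if even t then loopless_edge_var (t div 2) v * complete_walk_sum N s r (t div 2)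
            else (\<Sum>w'<Suc (t div 2). loopless_edge_var w' v * complete_walk_sum N s r w'))"
proof -
  note d = block_index_decode[OF assms(1-4), folded i_def]
  have "i \<noteq> 0" "i \<noteq> 1" "\<not> i < block_start N" using d(1) by (simp_all add: block_start_def)
  then show "trace_gate N m i = (if even t then GMul (2 + (t div 2) * N + v) (walk_gate N m s r (t div 2))
            else GAdd (if t div 2 = 0 then 0 else i - 2) (i - 1))"
    "trace_value N m i = (if even t then loopless_edge_var (t div 2) v * complete_walk_sum N s r (t div 2)
            else (\<Sum>w'<Suc (t div 2). loopless_edge_var w' v * complete_walk_sum N s r w'))"
    unfolding trace_gate_def trace_value_def Let_def using d(2-6) by (simp_all only: if_False if_True)
qed

lemma trace_value_walk_gate:
  assumes "s < N" "r \<le> m" "w < N"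
  shows "trace_value N m (walk_gate N m s r w) = complete_walk_sum N s r w"
proof (cases r)
  case 0
  then show ?thesis using assms by (simp add: walk_gate_def trace_value_def complete_walk_sum_0)
next
  case (Suc r')
  have "r' < m" "2 * N - 1 < 2 * N" "odd (2 * N - 1)" "(2 * N - 1) div 2 = N - 1"
    using assms Suc N by simp_all
  then have "trace_value N m (walk_gate N m s r w) =
      (\<Sum>w'<N. loopless_edge_var w' w * complete_walk_sum N s r' w')"
    using block_gate_value(2)[OF assms(1) _ assms(3), of r' "2 * N - 1"] Suc N
    by (simp add: walk_gate_def)
  also have "\<dots> = complete_walk_sum N s r w" using Suc by (simp add: complete_walk_sum_Suc[OF assms(3)])
  finally show ?thesis .
qed

lemma walk_gate_less_block:
  assumes "s < N" "r \<le> m" "w < N"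
  shows "walk_gate N m s r w < block_start N + (s * m + r) * N * (2 * N)"
proof (cases r)
  case 0
  then show ?thesis by (simp add: walk_gate_def block_start_def)
next
  case (Suc r')
  have "(s * m + r') * N + w + 1 \<le> (s * m + r) * N"
    using assms(3) Suc by (simp add: algebra_simps)
  then have "((s * m + r') * N + w + 1) * (2 * N) \<le> (s * m + r) * N * (2 * N)"
    by (rule mult_le_mono1)
  then show ?thesis using Suc N by (simp add: walk_gate_def algebra_simps)
qed

lemma valid_skew_gate_block_mul:
  assumes srv: "s < N" "r < m" "v < N" and t_less: "t < 2 * N" and parity: "even t"
  defines "i \<equiv> block_start N + ((s * m + r) * N + v) * (2 * N) + t"
  shows "valid_skew_gate (trace_gate N m) (trace_value N m :: nat \<Rightarrow> 'k::field mpoly) i"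
proof -
  let ?w = "t div 2"
  have w: "?w < N" using t_less parity by simp
  have input: "2 + ?w * N + v < block_start N" by (rule input_index_less[OF w srv(3)])
  have "walk_gate N m s r ?w < block_start N + (s * m + r) * N * (2 * N)"
    using walk_gate_less_block[OF srv(1) _ w] srv(2) by simp
  also have "\<dots> \<le> i" unfolding i_def by (simp add: algebra_simps)
  finally have "walk_gate N m s r ?w < i" .
  moreover have "2 + ?w * N + v < i" using input by (simp add: i_def)
  moreover have "is_input_gate (trace_gate N m (2 + ?w * N + v) :: 'k gate)"
    using input by (simp add: trace_gate_def is_input_gate_edge_gate)
  moreover have "trace_value N m (2 + ?w * N + v) = (loopless_edge_var ?w v :: 'k mpoly)"
    by (rule trace_value_input[OF w srv(3)])
  moreover have "trace_value N m (walk_gate N m s r ?w) = (complete_walk_sum N s r ?w :: 'k mpoly)"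
    by (rule trace_value_walk_gate[OF srv(1) _ w]) (use srv in simp)
  moreover have "trace_gate N m i = (GMul (2 + ?w * N + v) (walk_gate N m s r ?w) :: 'k gate)"
    "trace_value N m i = (loopless_edge_var ?w v * complete_walk_sum N s r ?w :: 'k mpoly)"
    using block_gate_value[OF srv t_less, folded i_def] parity by simp_all
  ultimately show ?thesis by (simp add: valid_skew_gate_def gate_sem_def gate_args_below_def)
qed

lemma valid_skew_gate_block_add:
  assumes srv: "s < N" "r < m" "v < N" and t_less: "t < 2 * N" and parity: "odd t"
  defines "i \<equiv> block_start N + ((s * m + r) * N + v) * (2 * N) + t"
  shows "valid_skew_gate (trace_gate N m) (trace_value N m :: nat \<Rightarrow> 'k::field mpoly) i"
proof -
  let ?w = "t div 2"
  let ?P = "\<lambda>w'. loopless_edge_var w' v * complete_walk_sum N s r w' :: 'k mpoly"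
  have gate: "trace_gate N m i = (GAdd (if ?w = 0 then 0 else i - 2) (i - 1) :: 'k gate)"
    and val: "trace_value N m i = (\<Sum>w'<Suc ?w. ?P w')"
    using block_gate_value[OF srv t_less, folded i_def] parity by simp_all
  have "t - 1 < 2 * N" "even (t - 1)" "(t - 1) div 2 = ?w" "i - 1 = block_start N + ((s * m + r) * N + v) * (2 * N) + (t - 1)"
    using t_less parity by (auto simp: i_def elim!: oddE)
  then have prev: "trace_value N m (i - 1) = ?P ?w"
    using block_gate_value(2)[OF srv _, of "t - 1"] by simp
  have block: "block_start N \<le> i" "2 \<le> block_start N"
    using block_index_decode(1)[OF srv t_less] by (simp_all add: i_def block_start_def)
  show ?thesis
  proof (cases "?w = 0")
    case True
    then show ?thesis using gate val prev block
      by (simp add: valid_skew_gate_def gate_sem_def gate_args_below_def)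
  next
    case False
    have "t - 2 < 2 * N" "odd (t - 2)" "(t - 2) div 2 = ?w - 1"
      "i - 2 = block_start N + ((s * m + r) * N + v) * (2 * N) + (t - 2)"
      using t_less parity False by (auto simp: i_def elim!: oddE)
    then have "trace_value N m (i - 2) = (\<Sum>w'<?w. ?P w')"
      using block_gate_value(2)[OF srv _, of "t - 2"] False by simp
    then show ?thesis using gate val prev block False
      by (simp add: valid_skew_gate_def gate_sem_def gate_args_below_def)
  qed
qed

lemma valid_skew_gate_final_sum:
  assumes i: "sum_start N m \<le> i" "i < sum_start N m + N"
  shows "valid_skew_gate (trace_gate N m) (trace_value N m :: nat \<Rightarrow> 'k::field mpoly) i"
proof -
  define s where "s = i - sum_start N m"
  have s: "s < N" using i unfolding s_def by simp
  have below: "2 \<le> block_start N" "block_start N \<le> sum_start N m"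
    by (simp_all add: block_start_def sum_start_def)
  have gate: "trace_gate N m i = (GAdd (if i = sum_start N m then 0 else i - 1) (walk_gate N m s m s) :: 'k gate)"
    using i below by (simp add: trace_gate_def s_def)
  have val: "trace_value N m i = (\<Sum>s'<Suc s. complete_walk_sum N s' m s' :: 'k mpoly)"
    using i below by (simp add: trace_value_def s_def)
  have walk: "trace_value N m (walk_gate N m s m s) = (complete_walk_sum N s m s :: 'k mpoly)"
    by (rule trace_value_walk_gate[OF s _ s]) simp
  have "m - 1 < m" "2 * N - 1 < 2 * N" using m N by simp_all
  from block_index_decode(2)[OF s this(1) s this(2)]
  have walk_less: "walk_gate N m s m s < sum_start N m" using m by (simp add: walk_gate_def)
  show ?thesis
  proof (cases "i = sum_start N m")
    case True
    then show ?thesis using gate val walk walk_less below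
      by (simp add: valid_skew_gate_def gate_sem_def gate_args_below_def s_def)
  next
    case False
    have "i - 1 \<noteq> 0" "i - 1 \<noteq> 1" "\<not> i - 1 < block_start N" "\<not> i - 1 < sum_start N m"
      "Suc (i - 1 - sum_start N m) = s"
      using i False below unfolding s_def by auto
    then have "trace_value N m (i - 1) = (\<Sum>s'<s. complete_walk_sum N s' m s' :: 'k mpoly)"
      unfolding trace_value_def by (simp only: if_False)
    then show ?thesis using gate val walk walk_less i False
      by (simp add: valid_skew_gate_def gate_sem_def gate_args_below_def)
  qed
qed

lemma valid_skew_gate_trace:
  assumes "i < sum_start N m + N"
  shows "valid_skew_gate (trace_gate N m) (trace_value N m :: nat \<Rightarrow> 'k::field mpoly) i"
proof -
  consider "i = 0" | "i = 1" | "2 \<le> i" "i < block_start N" | "block_start N \<le> i" "i < sum_start N m"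
    | "sum_start N m \<le> i" by linarith
  then show ?thesis
  proof cases
    case 3
    then show ?thesis by (intro valid_skew_gate_edge_gate) (simp_all add: trace_gate_def trace_value_def)
  next
    case 4
    then obtain s r v t where "s < N" "r < m" "v < N" "t < 2 * N"
      and "i = block_start N + ((s * m + r) * N + v) * (2 * N) + t"
      by (rule block_indexE)
    then show ?thesis
      using valid_skew_gate_block_mul valid_skew_gate_block_add by (cases "even t") simp_all
  next
    case 5
    then show ?thesis using assms by (rule valid_skew_gate_final_sum)
  qed (simp_all add: valid_skew_gate_def trace_gate_def trace_value_def gate_sem_def gate_args_below_def)
qed

lemma trace_value_last: "trace_value N m (sum_start N m + N - 1) = (\<Sum>s<N. complete_walk_sum N s m s)"
proof -
  have "sum_start N m + N - 1 \<noteq> 0" "sum_start N m + N - 1 \<noteq> 1"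
    "\<not> sum_start N m + N - 1 < block_start N" "\<not> sum_start N m + N - 1 < sum_start N m"
    "Suc (sum_start N m + N - 1 - sum_start N m) = N"
    using N m by (auto simp: sum_start_def block_start_def)
  then show ?thesis unfolding trace_value_def by (simp only: if_False)
qed

end

lemma cycle_hom_poly_in_VBP: "(cycle_hom_poly :: nat \<Rightarrow> 'k::field mpoly) \<in> VBP"
proof -
  let ?m = "\<lambda>k::nat. 2 * k + 1"
  let ?N = "\<lambda>k::nat. (2 * k + 1) * (2 * k + 1)"
  let ?C = "\<lambda>k. map (trace_gate (?N k) (?m k)) [0..<sum_start (?N k) (?m k) + ?N k] :: 'k gate list"
  define b where "b k = ?N k * ?N k + ?m k" for k
  define s where "s k = sum_start (?N k) (?m k) + ?N k" for k
  have "poly_bounded b" unfolding b_def by (intro poly_bounded_intros)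
  moreover have "poly_bounded s" unfolding s_def sum_start_def block_start_def by (intro poly_bounded_intros)
  moreover have "card (pvars (cycle_hom_poly k :: 'k mpoly)) \<le> b k" for k
  proof -
    have "card (pvars (cycle_hom_poly k :: 'k mpoly)) \<le> card (prod_encode ` ({0..<?N k} \<times> {0..<?N k}))"
      by (rule card_mono[OF _ pvars_cycle_hom_poly]) simp
    also have "\<dots> \<le> card ({0..<?N k} \<times> {0..<?N k})" by (rule card_image_le) simp
    finally show ?thesis by (simp add: b_def)
  qed
  moreover have "pdeg (cycle_hom_poly k :: 'k mpoly) \<le> b k" for k
    by (rule order_trans[OF pdeg_cycle_hom_poly]) (simp add: b_def)
  moreover have "circuit_wf (?C k) \<and> circuit_skew (?C k) \<and> length (?C k) \<le> s k \<and>
      circuit_output (?C k) = cycle_hom_poly k" for k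
  proof -
    have N: "0 < ?N k" and m: "0 < ?m k" by simp_all
    have pos: "0 < sum_start (?N k) (?m k) + ?N k" by simp
    have valid: "valid_skew_gate (trace_gate (?N k) (?m k)) (trace_value (?N k) (?m k) :: nat \<Rightarrow> 'k mpoly) i"
      if "i < sum_start (?N k) (?m k) + ?N k" for i
      using that by (rule valid_skew_gate_trace[OF N m])
    have circuit: "circuit_wf (?C k)" "circuit_skew (?C k)"
      "circuit_output (?C k) = trace_value (?N k) (?m k) (sum_start (?N k) (?m k) + ?N k - 1)"
      using circuit_of_valid_skew_gates[OF pos] valid by blast+
    show ?thesis
    proof (intro conjI)
      show "circuit_wf (?C k)" "circuit_skew (?C k)" by (fact circuit)+
      show "length (?C k) \<le> s k" by (simp add: s_def)
      show "circuit_output (?C k) = cycle_hom_poly k"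
        unfolding circuit(3) trace_value_last[OF N m] by (rule cycle_hom_poly_eq_trace[symmetric]) simp_all
    qed
  qed
  ultimately show ?thesis unfolding VBP_def p_family_def by blast
qed

theorem theorem6:
  assumes "CHAR('k::field) \<noteq> 2"
  shows "VBP_complete (cycle_hom_poly :: nat \<Rightarrow> 'k mpoly)"
  unfolding VBP_complete_def using cycle_hom_poly_in_VBP p_projection_cycle_hom_poly[OF assms] by blast

end
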